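(* Let $D=[0,1]$. For a sequence $\boldsymbol{\tau}=(\tau_m)_{m\in\mathbb{N}}$ of strictly positive real numbers consider the function \[ k_{\boldsymbol{\tau}}(x) := \sum_{m=1}^\infty \tau_m \frac{\sqrt2}{\pi m}\sin(m\pi x),\qquad x\in D, \] which is called pointwise well-defined if this series converges for every $x\in D$. Then: (i) for $\tau_m = m^{1/q}$ with $q>1$, the function $k_{\boldsymbol{\tau}}$ is pointwise well-defined on $D$, and in this case $(\tau_m^{-1})_{m\in\mathbb{N}}\in\ell^p(\mathbb{N})$ for every $p>q>1$; (ii) if $k_{\boldsymbol{\tau}}\colon[0,1]\to\mathbb{R}$ is pointwise well-defined for a sequence $\boldsymbol{\tau}$ with $(\tau_m^{-1})_{m\in\mathbb{N}}\in\ell^p(\mathbb{N})$ for some $p\leq 2$, then $k_{\boldsymbol{\tau}}\notin L^\infty(D)$.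
   Context: The functions $\phi_m(x)=\frac{\sqrt2}{\pi m}\sin(\pi m x)$, $m\in\mathbb{N}$, are the (scaled) Karhunen--Lo\`eve expansion functions of the standard Brownian bridge on $[0,1]$, i.e. the centered Gaussian process with covariance $\min(x,x')-xx'$, which has the representation $B(x)=\sum_{m\ge1}\phi_m(x)\xi_m$ with $\xi_m$ i.i.d. standard normal. *)

theory Defs
  imports "HOL-Analysis.Analysis"
begin

definition kterm :: "(nat \<Rightarrow> real) \<Rightarrow> real \<Rightarrow> nat \<Rightarrow> real" where
  "kterm \<tau> x m = \<tau> m * (sqrt 2 / (pi * real m)) * sin (real m * pi * x)"

definition k_tau :: "(nat \<Rightarrow> real) \<Rightarrow> real \<Rightarrow> real" where
  "k_tau \<tau> x = (\<Sum>n. kterm \<tau> x (Suc n))"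

definition pointwise_wd :: "(nat \<Rightarrow> real) \<Rightarrow> bool" where
  "pointwise_wd \<tau> \<longleftrightarrow> (\<forall>x\<in>{0..1}. summable (\<lambda>n. kterm \<tau> x (Suc n)))"

definition inv_in_lp :: "(nat \<Rightarrow> real) \<Rightarrow> real \<Rightarrow> bool" where
  "inv_in_lp \<tau> p \<longleftrightarrow> summable (\<lambda>n. \<bar>1 / \<tau> (Suc n)\<bar> powr p)"

definition in_Linf_D :: "(real \<Rightarrow> real) \<Rightarrow> bool" where
  "in_Linf_D f \<longleftrightarrow> f \<in> borel_measurable (restrict_space lborel {0..1}) \<and>
     (\<exists>C. AE x in lborel. x \<in> {0..1} \<longrightarrow> \<bar>f x\<bar> \<le> C)"

end

theory Submission
  imports Defs
begin

text \<open>
  Part (i): for \<open>\<tau>\<^sub>m = m\<^bsup>1/q\<^esup>\<close> the coefficients \<open>\<tau>\<^sub>m \<surd>2/(\<pi>m)\<close> decrease to zero, so the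
  series converges everywhere by Dirichlet's test (the partial sums of \<open>sin (m\<pi>x)\<close> are bounded),
  and \<open>\<tau>\<^sub>m\<^sup>-\<^sup>1 = m\<^bsup>-1/q\<^esup>\<close> is \<open>p\<close>-summable exactly for \<open>p > q\<close>.

  Part (ii): if \<open>k\<^sub>\<tau>\<close> were essentially bounded, the everywhere convergent sine series
  \<open>\<Sum> c\<^sub>m sin (m\<pi>x)\<close> with \<open>c\<^sub>m = \<tau>\<^sub>m \<surd>2/(\<pi>m)\<close> would have an essentially bounded sum. By the
  Cantor--Lebesgue theorem \<open>c\<^sub>m \<rightarrow> 0\<close>, so the twice integrated series
  \<open>F = \<Sum> c\<^sub>m (m\<pi>)\<^sup>-\<^sup>2 sin (m\<pi>x)\<close> is continuous, and by Riemann's first lemma its second symmetric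
  derivative is \<open>-k\<^sub>\<tau>\<close>. A maximum principle, with a convex function of Zygmund absorbing the
  exceptional null set, turns the a.e. bound into \<open>\<bar>F(x+h) + F(x-h) - 2F(x)\<bar> \<le> C h\<^sup>2\<close>, and
  Bessel's inequality for these second differences gives \<open>\<Sum> c\<^sub>m\<^sup>2 < \<infinity>\<close>, i.e.
  \<open>\<Sum> (\<tau>\<^sub>m/m)\<^sup>2 < \<infinity>\<close>. Since \<open>\<ell>\<^sup>p \<subseteq> \<ell>\<^sup>2\<close> for \<open>p \<le> 2\<close>, also \<open>\<Sum> \<tau>\<^sub>m\<^sup>-\<^sup>2 < \<infinity>\<close>,
  contradicting \<open>1/m \<le> (\<tau>\<^sub>m\<^sup>-\<^sup>2 + (\<tau>\<^sub>m/m)\<^sup>2)/2\<close> and the divergence of the harmonic series.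
\<close>

section \<open>Summation by parts\<close>

lemma sum_by_parts:
  fixes a v :: "nat \<Rightarrow> real"
  shows "(\<Sum>m<N. a m * v m) = (\<Sum>m<N. (\<Sum>i\<le>m. a i) * (v m - v (Suc m))) + (\<Sum>i<N. a i) * v N"
  by (induction N) (simp_all add: lessThan_Suc_atMost[symmetric] algebra_simps)

lemma sums_by_parts:
  fixes a v :: "nat \<Rightarrow> real"
  assumes bounded: "\<And>N. \<bar>\<Sum>i<N. a i\<bar> \<le> B"
    and v0: "v \<longlonglongrightarrow> 0"
    and variation: "summable (\<lambda>m. \<bar>v m - v (Suc m)\<bar>)"
  shows "(\<lambda>m. a m * v m) sums (\<Sum>m. (\<Sum>i\<le>m. a i) * (v m - v (Suc m)))"
proof -
  have parts: "summable (\<lambda>m. (\<Sum>i\<le>m. a i) * (v m - v (Suc m)))"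
  proof (rule summable_comparison_test[OF _ summable_mult[OF variation, of B]], intro exI allI impI)
    fix m
    have "\<bar>\<Sum>i\<le>m. a i\<bar> \<le> B"
      using bounded[of "Suc m"] by (simp only: lessThan_Suc_atMost)
    then show "norm ((\<Sum>i\<le>m. a i) * (v m - v (Suc m))) \<le> B * \<bar>v m - v (Suc m)\<bar>"
      unfolding real_norm_def abs_mult by (rule mult_right_mono) simp
  qed
  have "(\<lambda>N. (\<Sum>i<N. a i) * v N) \<longlonglongrightarrow> 0"
  proof (rule Lim_null_comparison[of _ "\<lambda>N. B * \<bar>v N\<bar>"])
    show "\<forall>\<^sub>F N in sequentially. norm ((\<Sum>i<N. a i) * v N) \<le> B * \<bar>v N\<bar>"
      unfolding real_norm_def abs_mult by (intro always_eventually allI mult_right_mono bounded) simp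
    show "(\<lambda>N. B * \<bar>v N\<bar>) \<longlonglongrightarrow> 0"
      using tendsto_mult_right_zero[OF tendsto_rabs_zero[OF v0]] .
  qed
  from tendsto_add[OF summable_LIMSEQ[OF parts] this] show ?thesis
    unfolding sums_def sum_by_parts[of a v] by simp
qed

lemma abs_sum_sin_le:
  fixes t :: real
  assumes "sin (t/2) \<noteq> 0"
  shows "\<bar>\<Sum>m<N. sin (real m * t)\<bar> \<le> 1 / \<bar>sin (t/2)\<bar>"
proof -
  have telescope: "2 * sin (t/2) * (\<Sum>m<N. sin (real m * t)) = cos (t/2) - cos ((real N - 1/2) * t)" for N
  proof (induction N)
    case (Suc N)
    have "2 * sin (t/2) * sin (real N * t) = cos (real N * t - t/2) - cos (real N * t + t/2)"
      unfolding cos_diff cos_add by simp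
    then show ?case
      using Suc.IH by (simp add: distrib_left algebra_simps)
  qed simp
  have "\<bar>cos (t/2) - cos ((real N - 1/2) * t)\<bar> \<le> 2"
    using abs_cos_le_one[of "t/2"] abs_cos_le_one[of "(real N - 1/2) * t"] by linarith
  then have "\<bar>sin (t/2)\<bar> * \<bar>\<Sum>m<N. sin (real m * t)\<bar> \<le> 1"
    using telescope[of N] by (simp add: abs_mult)
  then show ?thesis
    using assms by (simp add: field_simps)
qed

section \<open>The Cantor--Lebesgue theorem\<close>

lemma abs_sin_ge_half:
  fixes y :: real and j :: int
  assumes "of_int j * pi + pi/4 \<le> y" "y \<le> of_int j * pi + 3*pi/4"
  shows "1/2 \<le> \<bar>sin y\<bar>"
proof -
  define z where "z = y - of_int j * pi"
  have z: "pi/4 \<le> z" "z \<le> 3*pi/4"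
    using assms by (auto simp: z_def)
  have "sin y = sin z * cos (pi * of_int j)"
    by (simp add: z_def sin_diff mult_ac)
  then have "\<bar>sin y\<bar> = \<bar>sin z\<bar>"
    by (simp add: abs_mult)
  moreover have half: "1/2 \<le> sin w" if "pi/4 \<le> w" "w \<le> pi/2" for w
  proof -
    have "sin (pi/4) \<le> sin w"
      using that by (subst sin_mono_le_eq) (auto simp: field_simps)
    moreover have "(1/2::real) \<le> sqrt 2 / 2"
      by simp
    ultimately show ?thesis
      using sin_45 by linarith
  qed
  have "1/2 \<le> sin z"
  proof (cases "z \<le> pi/2")
    case False
    then show ?thesis
      using half[of "pi - z"] z by simp
  qed (use half z in auto)
  ultimately show ?thesis
    by simp
qed

lemma sin_ge_half_on_subinterval:
  assumes ab: "a < b" and frequent: "\<forall>N. \<exists>m\<ge>N. P m"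
  shows "\<exists>m a' b'. m \<ge> N \<and> P m \<and> a \<le> a' \<and> a' < b' \<and> b' \<le> b \<and>
           (\<forall>x\<in>{a'..b'}. 1/2 \<le> \<bar>sin (real m * pi * x)\<bar>)"
proof -
  obtain m where m: "m \<ge> max N (nat \<lceil>2/(b-a)\<rceil> + 1)" "P m"
    using frequent by blast
  have m_pos: "real m > 0"
    using m(1) by simp
  have "real m \<ge> real (nat \<lceil>2/(b-a)\<rceil> + 1)"
    using m(1) by linarith
  then have "2 / (b - a) < real m"
    using le_of_int_ceiling[of "2 / (b - a)"] by linarith
  then have "2 < (b - a) * real m"
    using ab by (simp add: divide_less_eq mult.commute)
  define j where "j = \<lceil>a * real m\<rceil>"
  have j: "a * real m \<le> of_int j" "of_int j < a * real m + 1"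
    unfolding j_def by linarith+
  define a' where "a' = (of_int j + 1/4) / real m"
  define b' where "b' = (of_int j + 3/4) / real m"
  have "a \<le> a'" "a' < b'" "b' \<le> b"
    using j \<open>2 < (b - a) * real m\<close> m_pos
    by (auto simp: a'_def b'_def field_simps)
  moreover have "1/2 \<le> \<bar>sin (real m * pi * x)\<bar>" if x: "x \<in> {a'..b'}" for x
  proof (rule abs_sin_ge_half[of j])
    have "of_int j + 1/4 \<le> real m * x" "real m * x \<le> of_int j + 3/4"
      using x m_pos unfolding a'_def b'_def by (auto simp: field_simps)
    then show "of_int j * pi + pi/4 \<le> real m * pi * x" "real m * pi * x \<le> of_int j * pi + 3*pi/4"
      by (auto simp: algebra_simps dest: mult_right_mono[OF _ pi_ge_zero])
  qed
  ultimately show ?thesis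
    using m by (intro exI[of _ m] exI[of _ a'] exI[of _ b']) auto
qed

text \<open>Nested intervals on which \<open>\<bar>sin (m\<^sub>k \<pi> x)\<bar> \<ge> 1/2\<close> for ever larger frequencies \<open>m\<^sub>k\<close>.\<close>
lemma frequently_abs_sin_ge_half:
  assumes frequent: "\<forall>N. \<exists>m\<ge>N. P m"
  obtains x where "x \<in> {0..1}" "\<forall>N. \<exists>m\<ge>N. P m \<and> 1/2 \<le> \<bar>sin (real m * pi * x)\<bar>"
proof -
  define Q :: "nat \<Rightarrow> real \<times> real \<times> nat \<Rightarrow> bool"
    where "Q n = (\<lambda>(a, b, m). 0 \<le> a \<and> a < b \<and> b \<le> 1)" for n
  define R :: "nat \<Rightarrow> real \<times> real \<times> nat \<Rightarrow> real \<times> real \<times> nat \<Rightarrow> bool"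
    where "R n = (\<lambda>(a, b, _) (a', b', m). a \<le> a' \<and> b' \<le> b \<and> n \<le> m \<and> P m \<and>
                    (\<forall>x\<in>{a'..b'}. 1/2 \<le> \<bar>sin (real m * pi * x)\<bar>))" for n
  have "\<exists>f. \<forall>n. Q n (f n) \<and> R n (f n) (f (Suc n))"
  proof (rule dependent_nat_choice)
    show "\<exists>t. Q 0 t"
      by (rule exI[of _ "(0, 1, 0)"]) (simp add: Q_def)
  next
    fix t n
    assume "Q n t"
    then obtain a b k where t: "t = (a, b, k)" "0 \<le> a" "a < b" "b \<le> 1"
      unfolding Q_def by (cases t) auto
    then obtain m a' b' where "m \<ge> n" "P m" "a \<le> a'" "a' < b'" "b' \<le> b"
        "\<forall>x\<in>{a'..b'}. 1/2 \<le> \<bar>sin (real m * pi * x)\<bar>"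
      using sin_ge_half_on_subinterval[OF t(3) frequent, of n] by blast
    then show "\<exists>t'. Q (Suc n) t' \<and> R n t t'"
      using t by (intro exI[of _ "(a', b', m)"]) (auto simp: Q_def R_def)
  qed
  then obtain f where f: "\<And>n. Q n (f n)" "\<And>n. R n (f n) (f (Suc n))"
    by blast
  define I where "I n = {fst (f n)..fst (snd (f n))}" for n
  have I_Suc: "I (Suc n) \<subseteq> I n" for n
    using f(2)[of n] unfolding I_def R_def by (auto split: prod.splits)
  have "\<Inter>(range I) \<noteq> {}"
  proof (rule compact_nest)
    show "compact (I n)" "I n \<noteq> {}" for n
      using f(1)[of n] by (auto simp: I_def Q_def split: prod.splits)
    show "I n' \<subseteq> I n" if "n \<le> n'" for n n'
      using lift_Suc_antimono_le[of I, OF I_Suc that] .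
  qed
  then obtain x where x: "\<And>n. x \<in> I n"
    by blast
  show thesis
  proof (rule that)
    show "x \<in> {0..1}"
      using x[of 0] f(1)[of 0] unfolding I_def Q_def by (auto split: prod.splits)
    show "\<forall>N. \<exists>m\<ge>N. P m \<and> 1/2 \<le> \<bar>sin (real m * pi * x)\<bar>"
    proof
      fix N
      show "\<exists>m\<ge>N. P m \<and> 1/2 \<le> \<bar>sin (real m * pi * x)\<bar>"
        using f(2)[of N] x[of "Suc N"] unfolding R_def I_def
        by (intro exI[of _ "snd (snd (f (Suc N)))"]) (auto split: prod.splits)
    qed
  qed
qed

theorem Cantor_Lebesgue:
  fixes c :: "nat \<Rightarrow> real"
  assumes lim: "\<And>x. x \<in> {0..1} \<Longrightarrow> (\<lambda>m. c m * sin (real m * pi * x)) \<longlonglongrightarrow> 0"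
  shows "c \<longlonglongrightarrow> 0"
proof (rule ccontr)
  assume "\<not> c \<longlonglongrightarrow> 0"
  then obtain \<epsilon> where \<epsilon>: "\<epsilon> > 0" "\<forall>N. \<exists>m\<ge>N. \<epsilon> \<le> \<bar>c m\<bar>"
    unfolding LIMSEQ_def dist_real_def by (auto simp: not_less)
  then obtain x where x: "x \<in> {0..1}" "\<forall>N. \<exists>m\<ge>N. \<epsilon> \<le> \<bar>c m\<bar> \<and> 1/2 \<le> \<bar>sin (real m * pi * x)\<bar>"
    by (auto elim: frequently_abs_sin_ge_half)
  obtain N where N: "\<And>m. m \<ge> N \<Longrightarrow> \<bar>c m * sin (real m * pi * x)\<bar> < \<epsilon>/2"
    using lim[OF x(1)] \<epsilon>(1) unfolding LIMSEQ_def dist_real_def by (metis half_gt_zero diff_zero)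
  obtain m where "m \<ge> N" "\<epsilon> \<le> \<bar>c m\<bar>" "1/2 \<le> \<bar>sin (real m * pi * x)\<bar>"
    using x(2) by blast
  then have "\<epsilon> * (1/2) \<le> \<bar>c m * sin (real m * pi * x)\<bar>"
    unfolding abs_mult by (intro mult_mono) (use \<epsilon> in auto)
  then show False
    using N[OF \<open>m \<ge> N\<close>] by simp
qed

section \<open>Summation of series with the kernel \<open>(sin y / y)\<^sup>2\<close>\<close>

definition sinc_sq :: "real \<Rightarrow> real" where
  "sinc_sq y = (if y = 0 then 1 else (sin y / y)^2)"

lemma sinc_sq_nonneg: "0 \<le> sinc_sq y"
  by (simp add: sinc_sq_def)

lemma sinc_sq_le_1: "sinc_sq y \<le> 1"
proof (cases "y = 0")
  case False
  have "\<bar>sin y / y\<bar> \<le> 1"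
    using abs_sin_x_le_abs_x[of y] False by (simp add: abs_div field_simps)
  then have "\<bar>sin y / y\<bar>^2 \<le> 1"
    by (intro power_le_one) auto
  then show ?thesis
    using False by (simp add: sinc_sq_def power_divide)
qed (simp add: sinc_sq_def)

lemma sinc_sq_le_inverse_sq: "y \<noteq> 0 \<Longrightarrow> sinc_sq y \<le> 1 / y^2"
  by (simp add: sinc_sq_def power_divide divide_right_mono abs_square_le_1)

lemma isCont_sinc_sq_0: "isCont sinc_sq 0"
proof -
  have "((\<lambda>y. sin y / y) \<longlongrightarrow> 1) (at (0::real))"
    using DERIV_sin[of 0] unfolding has_field_derivative_iff by simp
  then have "((\<lambda>y. (sin y / y)^2) \<longlongrightarrow> 1) (at (0::real))"
    using tendsto_power[of _ 1 _ 2] by fastforce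
  then have "(sinc_sq \<longlongrightarrow> 1) (at 0)"
    by (rule Lim_transform_eventually) (auto simp: sinc_sq_def eventually_at_filter)
  then show ?thesis
    unfolding isCont_def by (simp add: sinc_sq_def)
qed

lemma tendsto_sinc_sq_mult: "\<theta> > 0 \<Longrightarrow> (\<lambda>m. sinc_sq (real m * \<theta>)) \<longlonglongrightarrow> 0"
proof (rule Lim_null_comparison[of _ "\<lambda>m. (1 / real m)^2 * (1 / \<theta>^2)"])
  assume \<theta>: "\<theta> > 0"
  show "\<forall>\<^sub>F m in sequentially. norm (sinc_sq (real m * \<theta>)) \<le> (1 / real m)^2 * (1 / \<theta>^2)"
  proof (rule eventually_sequentiallyI[of 1])
    fix m :: nat
    assume "1 \<le> m"
    then show "norm (sinc_sq (real m * \<theta>)) \<le> (1 / real m)^2 * (1 / \<theta>^2)"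
      using \<theta> sinc_sq_le_inverse_sq[of "real m * \<theta>"] sinc_sq_nonneg[of "real m * \<theta>"]
      by (simp add: power_mult_distrib power_divide)
  qed
  show "(\<lambda>m. (1 / real m)^2 * (1 / \<theta>^2)) \<longlonglongrightarrow> 0"
    using tendsto_mult[OF tendsto_power[OF lim_1_over_n, of 2] tendsto_const[of "1/\<theta>^2"]] by simp
qed

lemma abs_mult_cos_minus_sin_le:
  fixes y :: real
  assumes "0 \<le> y"
  shows "\<bar>y * cos y - sin y\<bar> \<le> y^3"
proof (cases "y = 0")
  case False
  then have y: "y > 0"
    using assms by simp
  obtain z where z: "0 < z" "z < y" "y * cos y - sin y = y * (- z * sin z)"
    using MVT2[OF y, of "\<lambda>y. y * cos y - sin y" "\<lambda>z. - z * sin z"]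
    by (force intro!: derivative_eq_intros simp: algebra_simps)
  have "\<bar>z * sin z\<bar> \<le> z * z"
    using abs_sin_x_le_abs_x[of z] z by (simp add: abs_mult mult_left_mono)
  also have "\<dots> \<le> y * y"
    using z by (intro mult_mono) auto
  finally show ?thesis
    using z(3) y by (simp add: abs_mult power3_eq_cube mult_left_mono)
qed simp

lemma abs_sinc_sq_deriv_le:
  fixes y :: real
  assumes y: "y > 0"
  shows "\<bar>2 * sin y * (y * cos y - sin y) / y^3\<bar> \<le> 4"
    and "1 \<le> y \<Longrightarrow> \<bar>2 * sin y * (y * cos y - sin y) / y^3\<bar> \<le> 4 / y^2"
proof -
  have large: "\<bar>2 * sin y * (y * cos y - sin y) / y^3\<bar> \<le> 4 / y^2" if "1 \<le> y"
  proof -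
    have "\<bar>y * cos y\<bar> \<le> y"
      using that abs_cos_le_one[of y] by (simp add: abs_mult mult_left_le)
    moreover have "\<bar>sin y\<bar> \<le> y"
      using that abs_sin_le_one[of y] by linarith
    ultimately have "\<bar>y * cos y - sin y\<bar> \<le> 2 * y"
      by linarith
    then have "\<bar>2 * sin y * (y * cos y - sin y)\<bar> \<le> 2 * 1 * (2 * y)"
      unfolding abs_mult by (intro mult_mono) auto
    then have "\<bar>2 * sin y * (y * cos y - sin y) / y^3\<bar> \<le> 4 * y / y^3"
      using y by (simp add: abs_divide divide_right_mono)
    also have "\<dots> = 4 / y^2"
      using y by (simp add: power2_eq_square power3_eq_cube)
    finally show ?thesis .
  qed
  then show "1 \<le> y \<Longrightarrow> \<bar>2 * sin y * (y * cos y - sin y) / y^3\<bar> \<le> 4 / y^2" .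
  show "\<bar>2 * sin y * (y * cos y - sin y) / y^3\<bar> \<le> 4"
  proof (cases "1 \<le> y")
    case True
    then show ?thesis
      using large order_trans[of _ "4 / y^2" 4] by (simp add: field_simps)
  next
    case False
    have "\<bar>2 * sin y * (y * cos y - sin y)\<bar> \<le> 2 * y * y^3"
      unfolding abs_mult using abs_sin_x_le_abs_x[of y] abs_mult_cos_minus_sin_le[of y] y
      by (intro mult_mono) auto
    then have "\<bar>2 * sin y * (y * cos y - sin y) / y^3\<bar> \<le> 2 * y"
      using y by (simp add: abs_divide pos_divide_le_eq algebra_simps)
    then show ?thesis
      using False by linarith
  qed
qed

lemma abs_sinc_sq_diff_le:
  fixes y z :: real
  assumes y: "0 < y" "y < z"
  shows "\<bar>sinc_sq y - sinc_sq z\<bar> \<le> 4 * (z - y)"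
    and "1 \<le> y \<Longrightarrow> \<bar>sinc_sq y - sinc_sq z\<bar> \<le> 4 * (z - y) / y^2"
proof -
  define d where "d \<xi> = 2 * sin \<xi> * (\<xi> * cos \<xi> - sin \<xi>) / \<xi>^3" for \<xi> :: real
  have "((\<lambda>y. (sin y / y)^2) has_real_derivative d \<xi>) (at \<xi>)" if "\<xi> > 0" for \<xi>
    unfolding d_def using that
    by (auto intro!: derivative_eq_intros simp: field_simps power2_eq_square power3_eq_cube)
  then obtain \<xi> where \<xi>: "y < \<xi>" "\<xi> < z" "(sin z / z)^2 - (sin y / y)^2 = (z - y) * d \<xi>"
    using MVT2[OF y(2), of "\<lambda>y. (sin y / y)^2" d] y(1) by force
  have diff: "\<bar>sinc_sq y - sinc_sq z\<bar> = (z - y) * \<bar>d \<xi>\<bar>"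
    using \<xi> y by (simp add: sinc_sq_def abs_minus_commute[of "(sin y / y)^2"] abs_mult)
  have "(z - y) * \<bar>d \<xi>\<bar> \<le> (z - y) * 4"
    unfolding d_def using abs_sinc_sq_deriv_le(1)[of \<xi>] \<xi> y by (intro mult_left_mono) auto
  then show "\<bar>sinc_sq y - sinc_sq z\<bar> \<le> 4 * (z - y)"
    unfolding diff by (simp add: mult.commute)
  assume "1 \<le> y"
  then have "\<bar>d \<xi>\<bar> \<le> 4 / \<xi>^2"
    unfolding d_def using abs_sinc_sq_deriv_le(2)[of \<xi>] \<xi> by simp
  also have "\<dots> \<le> 4 / y^2"
    using \<xi> y by (intro divide_left_mono power_mono) auto
  finally have "\<bar>d \<xi>\<bar> \<le> 4 / y^2" .
  have "\<bar>sinc_sq y - sinc_sq z\<bar> \<le> (z - y) * (4 / y^2)"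
    unfolding diff using \<open>\<bar>d \<xi>\<bar> \<le> 4 / y^2\<close> y by (intro mult_left_mono) auto
  then show "\<bar>sinc_sq y - sinc_sq z\<bar> \<le> 4 * (z - y) / y^2"
    by (simp add: mult.commute)
qed

lemma sum_inverse_sq_le:
  assumes K: "2 \<le> K"
  shows "(\<Sum>m\<in>{K..<L}. 1 / (real m)^2) \<le> 1 / (real K - 1)"
proof -
  have telescope: "(\<Sum>m\<in>{K..<K+j}. 1 / (real m)^2) \<le> 1 / (real K - 1) - 1 / (real (K+j) - 1)" for j
  proof (induction j)
    case (Suc j)
    define n where "n = real (K + j)"
    have n: "n \<ge> 2"
      using K by (simp add: n_def)
    have "1 / n^2 \<le> 1 / ((n - 1) * n)"
      using n by (intro divide_left_mono) (auto simp: power2_eq_square)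
    also have "\<dots> = 1 / (n - 1) - 1 / n"
      using n by (simp add: field_simps)
    finally show ?case
      using Suc.IH by (simp add: n_def)
  qed simp
  show ?thesis
  proof (cases "K \<le> L")
    case True
    with telescope[of "L - K"]
    have "(\<Sum>m\<in>{K..<L}. 1 / (real m)^2) \<le> 1 / (real K - 1) - 1 / (real L - 1)"
      by simp
    moreover have "0 \<le> 1 / (real L - 1)"
      using K True by simp
    ultimately show ?thesis
      by linarith
  qed simp
qed

lemma sinc_sq_variation_head_le:
  assumes \<theta>: "0 < \<theta>" and K: "1 \<le> K"
  shows "(\<Sum>m\<in>{1..<K}. \<bar>sinc_sq (real m * \<theta>) - sinc_sq (real (Suc m) * \<theta>)\<bar>) \<le> (real K - 1) * (4 * \<theta>)"
proof -
  have "(\<Sum>m\<in>{1..<K}. \<bar>sinc_sq (real m * \<theta>) - sinc_sq (real (Suc m) * \<theta>)\<bar>) \<le> (\<Sum>m\<in>{1..<K}. 4 * \<theta>)"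
  proof (rule sum_mono)
    fix m
    assume "m \<in> {1..<K}"
    then have "0 < real m * \<theta>"
      using \<theta> by simp
    from abs_sinc_sq_diff_le(1)[OF this, of "real (Suc m) * \<theta>"]
    show "\<bar>sinc_sq (real m * \<theta>) - sinc_sq (real (Suc m) * \<theta>)\<bar> \<le> 4 * \<theta>"
      using \<theta> by (simp add: algebra_simps)
  qed
  also have "\<dots> = (real K - 1) * (4 * \<theta>)"
    using K by (simp add: of_nat_diff)
  finally show ?thesis .
qed

lemma sinc_sq_variation_tail_le:
  assumes \<theta>: "0 < \<theta>" and K: "2 \<le> K" "1 \<le> real K * \<theta>"
  shows "(\<Sum>m\<in>{K..<L}. \<bar>sinc_sq (real m * \<theta>) - sinc_sq (real (Suc m) * \<theta>)\<bar>) \<le> (4/\<theta>) * (1 / (real K - 1))"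
proof -
  have "(\<Sum>m\<in>{K..<L}. \<bar>sinc_sq (real m * \<theta>) - sinc_sq (real (Suc m) * \<theta>)\<bar>)
      \<le> (\<Sum>m\<in>{K..<L}. (4/\<theta>) * (1 / (real m)^2))"
  proof (rule sum_mono)
    fix m
    assume "m \<in> {K..<L}"
    then have "real K * \<theta> \<le> real m * \<theta>"
      using \<theta> by (intro mult_right_mono) auto
    with K have "1 \<le> real m * \<theta>"
      by linarith
    then have "\<bar>sinc_sq (real m * \<theta>) - sinc_sq (real (Suc m) * \<theta>)\<bar> \<le> 4 * \<theta> / (real m * \<theta>)^2"
      using abs_sinc_sq_diff_le(2)[of "real m * \<theta>" "real (Suc m) * \<theta>"] \<theta> by (simp add: algebra_simps)
    then show "\<bar>sinc_sq (real m * \<theta>) - sinc_sq (real (Suc m) * \<theta>)\<bar> \<le> (4/\<theta>) * (1 / (real m)^2)"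
      using \<theta> by (simp add: power2_eq_square field_simps)
  qed
  also have "\<dots> = (4/\<theta>) * (\<Sum>m\<in>{K..<L}. 1 / (real m)^2)"
    by (simp add: sum_distrib_left)
  also have "\<dots> \<le> (4/\<theta>) * (1 / (real K - 1))"
    using sum_inverse_sq_le[OF K(1)] \<theta> by (intro mult_left_mono) auto
  finally show ?thesis .
qed

text \<open>The frequencies \<open>m < 1/\<theta>\<close> and \<open>m \<ge> 1/\<theta>\<close> are estimated with the derivative bounds
  \<open>4\<close> and \<open>4/y\<^sup>2\<close> respectively.\<close>
lemma sinc_sq_variation_le:
  assumes \<theta>: "0 < \<theta>" "\<theta> \<le> 1/2"
  shows "(\<Sum>m<M. \<bar>sinc_sq (real m * \<theta>) - sinc_sq (real (Suc m) * \<theta>)\<bar>) \<le> 13"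
proof -
  define d where "d m = \<bar>sinc_sq (real m * \<theta>) - sinc_sq (real (Suc m) * \<theta>)\<bar>" for m
  define K where "K = nat \<lceil>1/\<theta>\<rceil>"
  have "real K = of_int \<lceil>1/\<theta>\<rceil>"
    unfolding K_def using \<theta> by simp
  then have K: "1/\<theta> \<le> real K" "real K < 1/\<theta> + 1"
    by linarith+
  moreover have "2 \<le> 1/\<theta>"
    using \<theta> by (simp add: field_simps)
  ultimately have "2 \<le> K"
    by linarith
  define L where "L = M + K"
  have "(\<Sum>m<M. d m) \<le> (\<Sum>m<L. d m)"
    by (rule sum_mono2) (auto simp: L_def d_def)
  also have "\<dots> = d 0 + (\<Sum>m\<in>{1..<K}. d m) + (\<Sum>m\<in>{K..<L}. d m)"
    using \<open>2 \<le> K\<close> unfolding lessThan_atLeast0 L_def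
    by (simp add: sum.atLeastLessThan_concat sum.atLeast_Suc_lessThan)
  also have "\<dots> \<le> 1 + 4 + 8"
  proof (intro add_mono)
    show "d 0 \<le> 1"
      using sinc_sq_nonneg[of \<theta>] sinc_sq_le_1[of \<theta>] by (simp add: d_def sinc_sq_def)
    have "(real K - 1) * (4 * \<theta>) \<le> (1/\<theta>) * (4 * \<theta>)"
      using K \<theta> by (intro mult_right_mono) auto
    then show "(\<Sum>m\<in>{1..<K}. d m) \<le> 4"
      using sinc_sq_variation_head_le[OF \<theta>(1), of K] \<open>2 \<le> K\<close> \<theta> unfolding d_def by simp
    have "1 \<le> real K * \<theta>"
      using K \<theta> by (simp add: field_simps)
    moreover have "(4/\<theta>) * (1 / (real K - 1)) \<le> (4/\<theta>) * (2 * \<theta>)"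
      using K \<theta> \<open>2 \<le> K\<close> by (intro mult_left_mono) (auto simp: field_simps)
    ultimately show "(\<Sum>m\<in>{K..<L}. d m) \<le> 8"
      using sinc_sq_variation_tail_le[OF \<theta>(1) \<open>2 \<le> K\<close>, of L] \<theta> unfolding d_def by simp
  qed
  finally show ?thesis
    unfolding d_def by simp
qed

lemma abs_suminf_mult_le_split:
  fixes b d :: "nat \<Rightarrow> real"
  assumes d: "summable (\<lambda>m. \<bar>d m\<bar>)"
    and C: "\<And>m. \<bar>b m\<bar> \<le> C"
    and \<epsilon>: "\<And>m. N \<le> m \<Longrightarrow> \<bar>b m\<bar> \<le> \<epsilon>"
  shows "\<bar>\<Sum>m. b m * d m\<bar> \<le> C * (\<Sum>m<N. \<bar>d m\<bar>) + \<epsilon> * (\<Sum>m. \<bar>d m\<bar>)"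
proof -
  define g where "g m = C * (if m \<in> {..<N} then \<bar>d m\<bar> else 0) + \<epsilon> * \<bar>d m\<bar>" for m
  have "0 \<le> \<epsilon>"
    using \<epsilon>[of N] by simp
  have le: "\<bar>b m * d m\<bar> \<le> g m" for m
  proof (cases "m < N")
    case True
    have "\<bar>b m\<bar> * \<bar>d m\<bar> \<le> C * \<bar>d m\<bar>"
      using C by (rule mult_right_mono) simp
    then show ?thesis
      using True mult_nonneg_nonneg[OF \<open>0 \<le> \<epsilon>\<close> abs_ge_zero[of "d m"]] by (simp add: g_def abs_mult)
  next
    case False
    have "\<bar>b m\<bar> * \<bar>d m\<bar> \<le> \<epsilon> * \<bar>d m\<bar>"
      using \<epsilon> False by (intro mult_right_mono) auto
    then show ?thesis
      using False by (simp add: g_def abs_mult)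
  qed
  have g: "g sums (C * (\<Sum>m<N. \<bar>d m\<bar>) + \<epsilon> * (\<Sum>m. \<bar>d m\<bar>))"
    unfolding g_def
    by (intro sums_add sums_mult[OF sums_If_finite_set] sums_mult[OF summable_sums[OF d]]) simp
  have "summable (\<lambda>m. \<bar>b m * d m\<bar>)"
    by (rule summable_comparison_test[OF _ sums_summable[OF g]]) (use le in auto)
  then have "\<bar>\<Sum>m. b m * d m\<bar> \<le> (\<Sum>m. \<bar>b m * d m\<bar>)"
    by (rule summable_rabs)
  also have "\<dots> \<le> C * (\<Sum>m<N. \<bar>d m\<bar>) + \<epsilon> * (\<Sum>m. \<bar>d m\<bar>)"
    using sums_le[OF le _ g] \<open>summable (\<lambda>m. \<bar>b m * d m\<bar>)\<close> by (simp add: summable_sums)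
  finally show ?thesis .
qed

lemma sums_mult_by_parts:
  fixes a w :: "nat \<Rightarrow> real"
  assumes a: "a sums s" and w0: "w \<longlonglongrightarrow> 0" and variation: "summable (\<lambda>m. \<bar>w m - w (Suc m)\<bar>)"
  shows "(\<lambda>m. a m * w m) sums ((\<Sum>m. ((\<Sum>i\<le>m. a i) - s) * (w m - w (Suc m))) + s * w 0)"
proof -
  obtain B where B: "\<And>N. \<bar>\<Sum>i<N. a i\<bar> \<le> B"
    using convergent_imp_Bseq[OF convergentI[OF a[unfolded sums_def]]] unfolding Bseq_def real_norm_def
    by blast
  have parts: "(\<lambda>m. a m * w m) sums (\<Sum>m. (\<Sum>i\<le>m. a i) * (w m - w (Suc m)))"
    by (rule sums_by_parts[OF B w0 variation])
  have "summable (\<lambda>m. (\<Sum>i\<le>m. a i) * (w m - w (Suc m)))"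
  proof (rule summable_comparison_test[OF _ summable_mult[OF variation, of B]], intro exI allI impI)
    fix m
    show "norm ((\<Sum>i\<le>m. a i) * (w m - w (Suc m))) \<le> B * \<bar>w m - w (Suc m)\<bar>"
      using B[of "Suc m"] unfolding real_norm_def abs_mult lessThan_Suc_atMost by (rule mult_right_mono) simp
  qed
  moreover have "(\<lambda>m. w m - w (Suc m)) sums w 0"
    using telescope_sums'[OF w0] by simp
  ultimately have "(\<lambda>m. ((\<Sum>i\<le>m. a i) - s) * (w m - w (Suc m))) sums
      ((\<Sum>m. (\<Sum>i\<le>m. a i) * (w m - w (Suc m))) - s * w 0)"
    unfolding left_diff_distrib by (intro sums_diff sums_mult summable_sums)
  then show ?thesis
    using parts by (simp add: sums_iff)
qed

lemma tendsto_suminf_mult_null: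
  fixes b :: "nat \<Rightarrow> real" and d :: "'a \<Rightarrow> nat \<Rightarrow> real"
  assumes b: "b \<longlonglongrightarrow> 0"
    and d: "\<forall>\<^sub>F \<theta> in F. summable (\<lambda>m. \<bar>d \<theta> m\<bar>) \<and> (\<Sum>m. \<bar>d \<theta> m\<bar>) \<le> V"
    and d0: "\<And>m. ((\<lambda>\<theta>. d \<theta> m) \<longlongrightarrow> 0) F"
  shows "((\<lambda>\<theta>. \<Sum>m. b m * d \<theta> m) \<longlongrightarrow> 0) F"
proof (rule tendstoI)
  fix \<epsilon> :: real
  assume "\<epsilon> > 0"
  obtain C where C: "\<And>m. \<bar>b m\<bar> \<le> C"
    using convergent_imp_Bseq[OF convergentI[OF b]] unfolding Bseq_def real_norm_def by blast
  then have "0 \<le> C"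
    by (meson abs_ge_zero order_trans)
  define \<eta> where "\<eta> = \<epsilon> / (2 * (\<bar>V\<bar> + 1))"
  have "\<eta> > 0"
    using \<open>\<epsilon> > 0\<close> by (simp add: \<eta>_def add_nonneg_pos)
  then obtain N where N: "\<And>m. N \<le> m \<Longrightarrow> \<bar>b m\<bar> \<le> \<eta>"
    using b unfolding LIMSEQ_def dist_real_def diff_zero by (meson less_imp_le)
  have "((\<lambda>\<theta>. \<Sum>m<N. \<bar>d \<theta> m\<bar>) \<longlongrightarrow> (\<Sum>m<N. \<bar>0\<bar>)) F"
    by (intro tendsto_intros d0)
  then have "\<forall>\<^sub>F \<theta> in F. (\<Sum>m<N. \<bar>d \<theta> m\<bar>) < \<epsilon> / (2 * (C + 1))"
    using \<open>\<epsilon> > 0\<close> \<open>0 \<le> C\<close> by (intro order_tendstoD(2)) auto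
  with d show "\<forall>\<^sub>F \<theta> in F. dist (\<Sum>m. b m * d \<theta> m) 0 < \<epsilon>"
  proof eventually_elim
    case (elim \<theta>)
    define D where "D = (\<Sum>m<N. \<bar>d \<theta> m\<bar>)"
    have "C * D \<le> (C + 1) * D"
      by (intro mult_right_mono) (auto simp: D_def)
    also have "\<dots> < (C + 1) * (\<epsilon> / (2 * (C + 1)))"
      using elim \<open>0 \<le> C\<close> by (intro mult_strict_left_mono) (auto simp: D_def)
    also have "\<dots> = \<epsilon> / 2"
      using \<open>0 \<le> C\<close> by (simp add: field_simps)
    finally have "C * D < \<epsilon> / 2" .
    moreover have "\<eta> * (\<Sum>m. \<bar>d \<theta> m\<bar>) \<le> \<eta> * (\<bar>V\<bar> + 1)"
      using elim \<open>\<eta> > 0\<close> by (intro mult_left_mono) auto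
    moreover have "\<eta> * (\<bar>V\<bar> + 1) = \<epsilon> / 2"
      by (simp add: \<eta>_def field_simps add_nonneg_pos)
    moreover have "\<bar>\<Sum>m. b m * d \<theta> m\<bar> \<le> C * D + \<eta> * (\<Sum>m. \<bar>d \<theta> m\<bar>)"
      unfolding D_def using elim by (intro abs_suminf_mult_le_split C N) auto
    ultimately show ?case
      by simp
  qed
qed

theorem tendsto_suminf_weighted:
  fixes a :: "nat \<Rightarrow> real" and w :: "'a \<Rightarrow> nat \<Rightarrow> real"
  assumes a: "a sums s"
    and decay: "\<forall>\<^sub>F \<theta> in F. w \<theta> \<longlonglongrightarrow> 0"
    and variation: "\<forall>\<^sub>F \<theta> in F. summable (\<lambda>m. \<bar>w \<theta> m - w \<theta> (Suc m)\<bar>) \<and>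
                                 (\<Sum>m. \<bar>w \<theta> m - w \<theta> (Suc m)\<bar>) \<le> V"
    and pointwise: "\<And>m. ((\<lambda>\<theta>. w \<theta> m) \<longlongrightarrow> 1) F"
  shows "((\<lambda>\<theta>. \<Sum>m. a m * w \<theta> m) \<longlongrightarrow> s) F"
proof -
  define E where "E \<theta> = (\<Sum>m. ((\<Sum>i\<le>m. a i) - s) * (w \<theta> m - w \<theta> (Suc m)))" for \<theta>
  have "(\<lambda>m. \<Sum>i\<le>m. a i) \<longlonglongrightarrow> s"
    using LIMSEQ_Suc[OF a[unfolded sums_def]] by (simp only: lessThan_Suc_atMost)
  then have partial_sums: "(\<lambda>m. (\<Sum>i\<le>m. a i) - s) \<longlonglongrightarrow> 0"
    by (rule LIM_zero)
  have "((\<lambda>\<theta>. w \<theta> m - w \<theta> (Suc m)) \<longlongrightarrow> 0) F" for m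
    using tendsto_diff[OF pointwise[of m] pointwise[of "Suc m"]] by simp
  then have "(E \<longlongrightarrow> 0) F"
    unfolding E_def
    by (rule tendsto_suminf_mult_null[where d = "\<lambda>\<theta> m. w \<theta> m - w \<theta> (Suc m)", OF partial_sums variation])
  from tendsto_add[OF this tendsto_mult_left[OF pointwise[of 0], of s]]
  have "((\<lambda>\<theta>. E \<theta> + s * w \<theta> 0) \<longlongrightarrow> s) F"
    by simp
  moreover have "\<forall>\<^sub>F \<theta> in F. E \<theta> + s * w \<theta> 0 = (\<Sum>m. a m * w \<theta> m)"
    using decay variation
  proof eventually_elim
    case (elim \<theta>)
    then have "(\<lambda>m. a m * w \<theta> m) sums (E \<theta> + s * w \<theta> 0)"
      unfolding E_def by (intro sums_mult_by_parts[OF a]) auto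
    then show ?case
      by (rule sums_unique)
  qed
  ultimately show ?thesis
    by (rule Lim_transform_eventually)
qed

lemma tendsto_suminf_sinc_sq:
  fixes a :: "nat \<Rightarrow> real"
  assumes "a sums s"
  shows "((\<lambda>\<theta>. \<Sum>m. a m * sinc_sq (real m * \<theta>)) \<longlongrightarrow> s) (at_right 0)"
proof (rule tendsto_suminf_weighted[OF assms, where V = 13])
  have small: "\<forall>\<^sub>F \<theta> in at_right (0::real). 0 < \<theta> \<and> \<theta> \<le> 1/2"
    unfolding eventually_at_right_field by (rule exI[of _ "1/2"]) auto
  then show "\<forall>\<^sub>F \<theta> in at_right 0. (\<lambda>m. sinc_sq (real m * \<theta>)) \<longlonglongrightarrow> 0"
    by eventually_elim (simp add: tendsto_sinc_sq_mult)
  from small show "\<forall>\<^sub>F \<theta> in at_right 0.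
      summable (\<lambda>m. \<bar>sinc_sq (real m * \<theta>) - sinc_sq (real (Suc m) * \<theta>)\<bar>) \<and>
      (\<Sum>m. \<bar>sinc_sq (real m * \<theta>) - sinc_sq (real (Suc m) * \<theta>)\<bar>) \<le> 13"
  proof eventually_elim
    case (elim \<theta>)
    then have \<theta>: "0 < \<theta>" "\<theta> \<le> 1/2"
      by auto
    have "summable (\<lambda>m. \<bar>sinc_sq (real m * \<theta>) - sinc_sq (real (Suc m) * \<theta>)\<bar>)"
    proof (rule bounded_imp_summable[of _ 13])
      fix n
      show "(\<Sum>m\<le>n. \<bar>sinc_sq (real m * \<theta>) - sinc_sq (real (Suc m) * \<theta>)\<bar>) \<le> 13"
        using sinc_sq_variation_le[OF \<theta>, of "Suc n"] by (simp only: lessThan_Suc_atMost)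
    qed simp
    then show ?case
      using suminf_le_const sinc_sq_variation_le[OF \<theta>] by blast
  qed
  fix m :: nat
  have "((\<lambda>\<theta>. real m * \<theta>) \<longlongrightarrow> 0) (at_right (0::real))"
    by (intro tendsto_mult_right_zero tendsto_ident_at)
  from isCont_tendsto_compose[OF isCont_sinc_sq_0 this]
  show "((\<lambda>\<theta>. sinc_sq (real m * \<theta>)) \<longlongrightarrow> 1) (at_right 0)"
    by (simp add: sinc_sq_def)
qed

section \<open>Second symmetric differences\<close>

definition sym_diff2 :: "(real \<Rightarrow> real) \<Rightarrow> real \<Rightarrow> real \<Rightarrow> real" where
  "sym_diff2 f t h = f (t + h) + f (t - h) - 2 * f t"

text \<open>A maximum principle: \<open>g\<close> minus its chord over \<open>[x - h, x + h]\<close> attains its minimum at an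
  interior point \<open>t\<^sub>0\<close>, where every second difference of \<open>g\<close> is nonnegative.\<close>
lemma sym_diff2_nonpos_if_frequently_neg:
  fixes g :: "real \<Rightarrow> real"
  assumes cont: "continuous_on {a..b} g"
    and neg: "\<And>t. t \<in> {a<..<b} \<Longrightarrow> \<exists>\<^sub>F s in at_right 0. sym_diff2 g t s < 0"
    and x: "a \<le> x - h" "x + h \<le> b" "0 < h"
  shows "sym_diff2 g x h \<le> 0"
proof (rule ccontr)
  assume pos: "\<not> sym_diff2 g x h \<le> 0"
  define p where "p = x - h"
  define q where "q = x + h"
  have "p < q"
    using x by (simp add: p_def q_def)
  define l where "l t = g p + (g q - g p) * (t - p) / (q - p)" for t
  define \<phi> where "\<phi> t = g t - l t" for t
  have cont_\<phi>: "continuous_on {p..q} \<phi>"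
    unfolding \<phi>_def l_def using \<open>p < q\<close> x
    by (intro continuous_intros continuous_on_subset[OF cont]) (auto simp: p_def q_def)
  then obtain t\<^sub>0 where t\<^sub>0: "t\<^sub>0 \<in> {p..q}" "\<And>t. t \<in> {p..q} \<Longrightarrow> \<phi> t\<^sub>0 \<le> \<phi> t"
    using continuous_attains_inf[OF compact_Icc _ cont_\<phi>] \<open>p < q\<close> by fastforce
  have "l x = (g p + g q) / 2"
    unfolding l_def using \<open>p < q\<close> by (simp add: p_def q_def field_simps)
  then have "\<phi> x < 0"
    using pos unfolding \<phi>_def sym_diff2_def by (simp add: p_def q_def)
  then have "\<phi> t\<^sub>0 < 0"
    using t\<^sub>0(2)[of x] x by (simp add: p_def q_def)
  moreover have "\<phi> p = 0" "\<phi> q = 0"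
    unfolding \<phi>_def l_def using \<open>p < q\<close> by auto
  ultimately have "p < t\<^sub>0" "t\<^sub>0 < q"
    using t\<^sub>0(1) by (auto simp: order.order_iff_strict)
  then have "\<forall>\<^sub>F s in at_right 0. 0 < s \<and> s < min (t\<^sub>0 - p) (q - t\<^sub>0)"
    unfolding eventually_at_right_field by (intro exI[of _ "min (t\<^sub>0 - p) (q - t\<^sub>0)"]) auto
  moreover have "\<exists>\<^sub>F s in at_right 0. sym_diff2 g t\<^sub>0 s < 0"
    using \<open>p < t\<^sub>0\<close> \<open>t\<^sub>0 < q\<close> x by (intro neg) (auto simp: p_def q_def)
  ultimately obtain s where s: "0 < s" "s < min (t\<^sub>0 - p) (q - t\<^sub>0)" "sym_diff2 g t\<^sub>0 s < 0"
    using frequently_ex[OF frequently_eventually_conj] by (metis (no_types, lifting))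
  have "\<phi> t\<^sub>0 \<le> \<phi> (t\<^sub>0 + s)" "\<phi> t\<^sub>0 \<le> \<phi> (t\<^sub>0 - s)"
    using t\<^sub>0(2) s \<open>p < t\<^sub>0\<close> \<open>t\<^sub>0 < q\<close> by auto
  moreover have "l (t\<^sub>0 + s) + l (t\<^sub>0 - s) - 2 * l t\<^sub>0 = 0"
  proof -
    define k where "k = (g q - g p) / (q - p)"
    have l: "l t = g p + k * (t - p)" for t
      by (simp add: l_def k_def)
    show ?thesis
      unfolding l by (simp add: algebra_simps)
  qed
  ultimately have "0 \<le> sym_diff2 g t\<^sub>0 s"
    unfolding sym_diff2_def \<phi>_def by linarith
  with s(3) show False
    by simp
qed

lemma integrable_indicator_mult_bounded:
  fixes f :: "real \<Rightarrow> real"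
  assumes V: "V \<in> sets borel" "emeasure lborel V < \<infinity>"
    and f: "f \<in> borel_measurable borel" and M: "\<And>r. r \<in> V \<Longrightarrow> \<bar>f r\<bar> \<le> M"
  shows "integrable lborel (\<lambda>r. indicator V r * f r)"
proof (rule Bochner_Integration.integrable_bound[of _ "\<lambda>r. M * indicator V r"])
  show "integrable lborel (\<lambda>r. M * indicator V r :: real)"
    using V by (intro integrable_mult_right) auto
  show "(\<lambda>r. indicator V r * f r) \<in> borel_measurable lborel"
    using V f by measurable
  show "AE r in lborel. norm (indicator V r * f r) \<le> norm (M * indicator V r :: real)"
    using M by (intro AE_I2) (auto simp: indicator_def abs_mult intro: order.trans[OF M abs_ge_self])
qed

text \<open>The convolution of \<open>indicator V\<close> with the ramp \<open>max 0\<close>: a convex function whose second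
  derivative is \<open>indicator V\<close>.\<close>
definition ramp_integral :: "real set \<Rightarrow> real \<Rightarrow> real" where
  "ramp_integral V t = (LINT r|lborel. indicator V r * max 0 (t - r))"

context
  fixes V :: "real set" and R :: real
  assumes V_borel: "V \<in> sets borel" and V_bounded: "V \<subseteq> {-R..R}"
begin

private lemma mem_bounded: "r \<in> V \<Longrightarrow> -R \<le> r \<and> r \<le> R"
  using V_bounded by auto

private lemma emeasure_bounded_lt_infinity: "emeasure lborel V < \<infinity>"
proof -
  have "emeasure lborel V \<le> emeasure lborel {-\<bar>R\<bar>..\<bar>R\<bar>}"
    using V_bounded by (intro emeasure_mono) auto
  also have "\<dots> < \<infinity>"
    by (simp add: emeasure_lborel_Icc)
  finally show ?thesis .
qed

lemma integrable_ramp: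
  "integrable lborel (\<lambda>r. indicator V r * max 0 (t - r))"
  by (intro integrable_indicator_mult_bounded[OF V_borel emeasure_bounded_lt_infinity, of _ "\<bar>t\<bar> + \<bar>R\<bar>"])
     (auto simp: max_def abs_if dest!: mem_bounded)

lemma ramp_integral_nonneg: "0 \<le> ramp_integral V t"
  unfolding ramp_integral_def by (intro Bochner_Integration.integral_nonneg) (auto simp: indicator_def)

lemma ramp_integral_le: "ramp_integral V t \<le> (\<bar>t\<bar> + \<bar>R\<bar>) * measure lborel V"
proof -
  have "ramp_integral V t \<le> (LINT r|lborel. (\<bar>t\<bar> + \<bar>R\<bar>) * indicator V r)"
    unfolding ramp_integral_def
  proof (rule Bochner_Integration.integral_mono[OF integrable_ramp])
    show "integrable lborel (\<lambda>r. (\<bar>t\<bar> + \<bar>R\<bar>) * indicator V r :: real)"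
      using V_borel emeasure_bounded_lt_infinity by (intro integrable_mult_right) auto
    show "indicator V r * max 0 (t - r) \<le> (\<bar>t\<bar> + \<bar>R\<bar>) * indicator V r" for r
      by (auto simp: indicator_def max_def abs_if dest!: mem_bounded)
  qed
  then show ?thesis
    by simp
qed

lemma ramp_integral_lipschitz:
  "\<bar>ramp_integral V t - ramp_integral V s\<bar> \<le> \<bar>t - s\<bar> * measure lborel V"
proof -
  have "ramp_integral V t - ramp_integral V s =
      (LINT r|lborel. indicator V r * max 0 (t - r) - indicator V r * max 0 (s - r))"
    unfolding ramp_integral_def using integrable_ramp[of t] integrable_ramp[of s] by simp
  also have "\<bar>\<dots>\<bar> \<le> (LINT r|lborel. \<bar>indicator V r * max 0 (t - r) - indicator V r * max 0 (s - r)\<bar>)"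
    by (rule integral_abs_bound)
  also have "\<dots> \<le> (LINT r|lborel. \<bar>t - s\<bar> * indicator V r)"
  proof (rule Bochner_Integration.integral_mono)
    show "integrable lborel (\<lambda>r. \<bar>indicator V r * max 0 (t - r) - indicator V r * max 0 (s - r)\<bar>)"
      using integrable_ramp[of t] integrable_ramp[of s] by auto
    show "integrable lborel (\<lambda>r. \<bar>t - s\<bar> * indicator V r :: real)"
      using V_borel emeasure_bounded_lt_infinity by (intro integrable_mult_right) auto
    show "\<bar>indicator V r * max 0 (t - r) - indicator V r * max 0 (s - r)\<bar> \<le> \<bar>t - s\<bar> * indicator V r"
      for r
      by (auto simp: indicator_def max_def)
  qed
  also have "\<dots> = \<bar>t - s\<bar> * measure lborel V"
    by simp
  finally show ?thesis .
qed

lemma sym_diff2_ramp_integral: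
  "sym_diff2 (ramp_integral V) t h = (LINT r|lborel. indicator V r * sym_diff2 (\<lambda>t. max 0 (t - r)) t h)"
proof -
  have "(LINT r|lborel. indicator V r * sym_diff2 (\<lambda>t. max 0 (t - r)) t h) =
     (LINT r|lborel. indicator V r * max 0 (t + h - r) + indicator V r * max 0 (t - h - r)
        - 2 * (indicator V r * max 0 (t - r)))"
    by (intro Bochner_Integration.integral_cong) (auto simp: sym_diff2_def algebra_simps)
  also have "\<dots> = sym_diff2 (ramp_integral V) t h"
    unfolding ramp_integral_def sym_diff2_def
    using integrable_ramp[of "t + h"] integrable_ramp[of "t - h"] integrable_ramp[of t] by simp
  finally show ?thesis
    by simp
qed

lemma sym_diff2_ramp_integral_nonneg: "0 \<le> h \<Longrightarrow> 0 \<le> sym_diff2 (ramp_integral V) t h"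
  unfolding sym_diff2_ramp_integral
  by (intro Bochner_Integration.integral_nonneg) (auto simp: indicator_def sym_diff2_def max_def)

lemma sym_diff2_ramp_integral_ge:
  assumes h: "0 < h" and sub: "{t - h/2..t + h/2} \<subseteq> V"
  shows "h^2 / 2 \<le> sym_diff2 (ramp_integral V) t h"
proof -
  have "(LINT r|lborel. (h/2) * indicator {t - h/2..t + h/2} r)
      \<le> (LINT r|lborel. indicator V r * sym_diff2 (\<lambda>t. max 0 (t - r)) t h)"
  proof (rule Bochner_Integration.integral_mono)
    show "integrable lborel (\<lambda>r. h/2 * indicator {t - h/2..t + h/2} r :: real)"
      using h by (intro integrable_mult_right integrable_real_indicator) (auto simp: emeasure_lborel_Icc)
    show "integrable lborel (\<lambda>r. indicator V r * sym_diff2 (\<lambda>t. max 0 (t - r)) t h)"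
      unfolding sym_diff2_def
      by (intro integrable_indicator_mult_bounded[OF V_borel emeasure_bounded_lt_infinity,
            of _ "4 * (\<bar>t\<bar> + \<bar>h\<bar> + \<bar>R\<bar>)"]) (auto simp: max_def abs_if dest!: mem_bounded)
    show "h/2 * indicator {t - h/2..t + h/2} r \<le> indicator V r * sym_diff2 (\<lambda>t. max 0 (t - r)) t h"
      for r
      using sub h by (auto simp: indicator_def sym_diff2_def max_def)
  qed
  moreover have "(LINT r|lborel. (h/2) * indicator {t - h/2..t + h/2} r) = h^2 / 2"
    using h by (simp add: power2_eq_square)
  ultimately show ?thesis
    unfolding sym_diff2_ramp_integral by simp
qed

lemma eventually_sym_diff2_ramp_integral_ge:
  assumes "open V" "t \<in> V"
  shows "\<forall>\<^sub>F h in at_right 0. h^2 / 2 \<le> sym_diff2 (ramp_integral V) t h"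
proof -
  obtain \<delta> where \<delta>: "\<delta> > 0" "ball t \<delta> \<subseteq> V"
    using assms open_contains_ball by blast
  show ?thesis
    unfolding eventually_at_right_field
  proof (intro exI[of _ \<delta>] conjI allI impI)
    fix h :: real
    assume h: "0 < h" "h < \<delta>"
    then have "{t - h/2..t + h/2} \<subseteq> V"
      using \<delta>(2) by (auto simp: subset_iff dist_real_def)
    then show "h^2 / 2 \<le> sym_diff2 (ramp_integral V) t h"
      by (rule sym_diff2_ramp_integral_ge[OF h(1)])
  qed (use \<delta> in auto)
qed

end

lemma null_sets_open_cover:
  assumes N: "N \<in> null_sets lborel" and e: "0 < e"
  obtains U :: "real set" where "open U" "N \<subseteq> U" "emeasure lborel U < ennreal e"
proof -
  have N_borel: "N \<in> sets borel"
    using N by (simp add: null_sets_def)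
  obtain U where U: "open U" "N \<subseteq> U" "emeasure lborel (U - N) < e"
    using outer_regular_lborel[OF N_borel e] by blast
  have "U = (U - N) \<union> N"
    using U(2) by auto
  then have "emeasure lborel U = emeasure lborel (U - N)"
    using N N_borel U(1) by (metis emeasure_Un_null_set sets.Diff sets_lborel borel_open)
  with U show ?thesis
    using that by simp
qed

context
  fixes V :: "nat \<Rightarrow> real set"
  assumes V_open: "\<And>k. open (V k)"
    and V_bounded: "\<And>k. V k \<subseteq> {-(real k + 1)..real k + 1}"
    and V_small: "\<And>k. (real k + 1) * measure lborel (V k) \<le> (1/2)^k"
begin

private lemma V_borel: "V k \<in> sets borel"
  using V_open by simp

private lemma measure_le: "measure lborel (V k) \<le> (1/2)^k"
  using V_small[of k] mult_right_mono[of 1 "real k + 1" "measure lborel (V k)"] by simp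

lemma sums_ramp_integral_series: "(\<lambda>k. ramp_integral (V k) t) sums (\<Sum>k. ramp_integral (V k) t)"
proof -
  have "ramp_integral (V k) t \<le> (\<bar>t\<bar> + 1) * (1/2)^k" for k
  proof -
    have "ramp_integral (V k) t \<le> (\<bar>t\<bar> + (real k + 1)) * measure lborel (V k)"
      using ramp_integral_le[OF V_borel V_bounded, of k t] by simp
    also have "\<dots> \<le> ((\<bar>t\<bar> + 1) * (real k + 1)) * measure lborel (V k)"
      by (intro mult_right_mono) (auto simp: algebra_simps)
    also have "\<dots> = (\<bar>t\<bar> + 1) * ((real k + 1) * measure lborel (V k))"
      by (simp only: mult.assoc)
    also have "\<dots> \<le> (\<bar>t\<bar> + 1) * (1/2)^k"
      by (intro mult_left_mono V_small) simp
    finally show ?thesis .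
  qed
  then show ?thesis
    using ramp_integral_nonneg[OF V_borel V_bounded]
    by (intro summable_sums summable_comparison_test[OF _ summable_mult[OF summable_geometric[of "1/2"]]])
       auto
qed

lemma lipschitz_ramp_integral_series: "2-lipschitz_on UNIV (\<lambda>t. \<Sum>k. ramp_integral (V k) t)"
proof (rule lipschitz_onI)
  fix t s :: real
  define w where "w k = ramp_integral (V k)" for k
  have diff_le: "\<bar>w k t - w k s\<bar> \<le> \<bar>t - s\<bar> * (1/2)^k" for k
    unfolding w_def using ramp_integral_lipschitz[OF V_borel V_bounded, of k t s] measure_le[of k]
    by (meson abs_ge_zero mult_left_mono order_trans)
  have geometric: "(\<lambda>k. \<bar>t - s\<bar> * (1/2::real)^k) sums (\<bar>t - s\<bar> * 2)"
    using sums_mult[OF geometric_sums[of "1/2::real"], of "\<bar>t - s\<bar>"] by simp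
  have summable: "summable (\<lambda>k. \<bar>w k t - w k s\<bar>)"
    by (rule summable_comparison_test[OF _ sums_summable[OF geometric]]) (use diff_le in auto)
  have "(\<lambda>k. w k t - w k s) sums ((\<Sum>k. w k t) - (\<Sum>k. w k s))"
    unfolding w_def by (intro sums_diff sums_ramp_integral_series)
  then have "\<bar>(\<Sum>k. w k t) - (\<Sum>k. w k s)\<bar> \<le> (\<Sum>k. \<bar>w k t - w k s\<bar>)"
    using summable by (metis summable_rabs sums_unique)
  also have "\<dots> \<le> \<bar>t - s\<bar> * 2"
    using sums_le[OF diff_le summable_sums[OF summable] geometric] .
  finally show "dist (\<Sum>k. ramp_integral (V k) t) (\<Sum>k. ramp_integral (V k) s) \<le> 2 * dist t s"
    by (simp add: w_def dist_real_def)
qed simp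

lemma sums_sym_diff2_ramp_integral_series:
  "(\<lambda>k. sym_diff2 (ramp_integral (V k)) t h) sums sym_diff2 (\<lambda>t. \<Sum>k. ramp_integral (V k) t) t h"
  unfolding sym_diff2_def by (intro sums_diff sums_add sums_mult sums_ramp_integral_series)

lemma sym_diff2_ramp_integral_series_nonneg:
  "0 \<le> h \<Longrightarrow> 0 \<le> sym_diff2 (\<lambda>t. \<Sum>k. ramp_integral (V k) t) t h"
  using sums_le[OF _ sums_zero sums_sym_diff2_ramp_integral_series]
    sym_diff2_ramp_integral_nonneg[OF V_borel V_bounded] by blast

text \<open>At points lying in all but finitely many \<open>V k\<close>, infinitely many summands contribute
  \<open>h\<^sup>2/2\<close> each to the second difference for small \<open>h\<close>.\<close>
lemma eventually_sym_diff2_ramp_integral_series_ge: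
  assumes t: "\<And>k. k\<^sub>0 \<le> k \<Longrightarrow> t \<in> V k"
  shows "\<forall>\<^sub>F h in at_right 0. K * h^2 \<le> sym_diff2 (\<lambda>t. \<Sum>k. ramp_integral (V k) t) t h"
proof -
  define n where "n = nat \<lceil>2 * K\<rceil>"
  define I where "I = {k\<^sub>0..<k\<^sub>0 + n}"
  have "\<forall>\<^sub>F h in at_right 0. \<forall>k\<in>I. h^2 / 2 \<le> sym_diff2 (ramp_integral (V k)) t h"
    using t by (intro eventually_ball_finite ballI eventually_sym_diff2_ramp_integral_ge[OF V_borel V_bounded V_open])
      (auto simp: I_def)
  moreover have "\<forall>\<^sub>F h in at_right (0::real). 0 < h"
    by (simp add: eventually_at_right_less)
  ultimately show ?thesis
  proof eventually_elim
    case (elim h)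
    have "2 * K * (h^2 / 2) \<le> real n * (h^2 / 2)"
      unfolding n_def by (intro mult_right_mono real_nat_ceiling_ge) simp
    then have "K * h^2 \<le> (\<Sum>k\<in>I. h^2 / 2)"
      by (simp add: I_def)
    also have "\<dots> \<le> (\<Sum>k\<in>I. sym_diff2 (ramp_integral (V k)) t h)"
      using elim by (intro sum_mono) auto
    also have "\<dots> \<le> (\<Sum>k. sym_diff2 (ramp_integral (V k)) t h)"
      using sums_sym_diff2_ramp_integral_series[of t h] elim
        sym_diff2_ramp_integral_nonneg[OF V_borel V_bounded]
      by (intro sum_le_suminf) (auto simp: sums_iff I_def)
    also have "\<dots> = sym_diff2 (\<lambda>t. \<Sum>k. ramp_integral (V k) t) t h"
      using sums_sym_diff2_ramp_integral_series[of t h] by (simp add: sums_iff)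
    finally show ?case .
  qed
qed

end

lemma exists_convex_sym_diff2_blowup:
  assumes N: "N \<in> null_sets lborel"
  obtains W where "continuous_on UNIV W" "\<And>t h. 0 \<le> h \<Longrightarrow> 0 \<le> sym_diff2 W t h"
    "\<And>t K. t \<in> N \<Longrightarrow> \<forall>\<^sub>F h in at_right 0. K * h^2 \<le> sym_diff2 W t h"
proof -
  have "\<exists>U. open U \<and> N \<subseteq> U \<and> emeasure lborel U < ennreal ((1/2)^k / (real k + 1))" for k :: nat
    by (rule null_sets_open_cover[OF N, of "(1/2)^k / (real k + 1)"]) auto
  then obtain U where U: "\<And>k. open (U k)" "\<And>k. N \<subseteq> U k"
    "\<And>k. emeasure lborel (U k) < ennreal ((1/2)^k / (real k + 1))"
    by metis
  define V where "V k = U k \<inter> {-(real k + 1)<..<real k + 1}" for k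
  have V_open: "open (V k)" for k
    using U(1) by (simp add: V_def open_Int)
  have V_bounded: "V k \<subseteq> {-(real k + 1)..real k + 1}" for k
    by (auto simp: V_def)
  have measure_le: "measure lborel (V k) \<le> (1/2)^k / (real k + 1)" for k
  proof -
    have "emeasure lborel (V k) \<le> emeasure lborel (U k)"
      by (intro emeasure_mono) (auto simp: V_def U(1))
    then show ?thesis
      unfolding measure_def using U(3)[of k] by (intro enn2real_leI) auto
  qed
  have V_small: "(real k + 1) * measure lborel (V k) \<le> (1/2)^k" for k
    using mult_left_mono[OF measure_le[of k], of "real k + 1"] by simp
  have in_V: "t \<in> V k" if "t \<in> N" "nat \<lceil>\<bar>t\<bar>\<rceil> \<le> k" for t k
  proof -
    have "\<bar>t\<bar> \<le> real k"
      using real_nat_ceiling_ge[of "\<bar>t\<bar>"] that(2) of_nat_mono by fastforce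
    then show ?thesis
      using that(1) U(2)[of k] by (auto simp: V_def)
  qed
  show ?thesis
  proof (rule that)
    show "continuous_on UNIV (\<lambda>t. \<Sum>k. ramp_integral (V k) t)"
      by (rule lipschitz_on_continuous_on[OF lipschitz_ramp_integral_series[OF V_open V_bounded V_small]])
    show "0 \<le> sym_diff2 (\<lambda>t. \<Sum>k. ramp_integral (V k) t) t h" if "0 \<le> h" for t h
      by (rule sym_diff2_ramp_integral_series_nonneg[OF V_open V_bounded V_small that])
    show "\<forall>\<^sub>F h in at_right 0. K * h^2 \<le> sym_diff2 (\<lambda>t. \<Sum>k. ramp_integral (V k) t) t h"
      if "t \<in> N" for t K
      by (rule eventually_sym_diff2_ramp_integral_series_ge[OF V_open V_bounded V_small in_V[OF that]])
  qed
qed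

lemma eventually_sym_diff2_perturbed_neg_if_le:
  fixes F W :: "real \<Rightarrow> real"
  assumes lim: "((\<lambda>h. sym_diff2 F t h / h^2) \<longlongrightarrow> l) (at_right 0)"
    and W_convex: "\<And>h. 0 \<le> h \<Longrightarrow> 0 \<le> sym_diff2 W t h"
    and "l \<le> C" and \<epsilon>: "0 < \<epsilon>"
  shows "\<forall>\<^sub>F h in at_right 0. sym_diff2 F t h - (C + \<epsilon>) * h^2 - \<epsilon> * sym_diff2 W t h < 0"
proof -
  have "\<forall>\<^sub>F h in at_right 0. sym_diff2 F t h / h^2 < l + \<epsilon>"
    using lim \<epsilon> by (intro order_tendstoD(2)) auto
  moreover have "\<forall>\<^sub>F h in at_right (0::real). 0 < h"
    by (simp add: eventually_at_right_less)
  ultimately show ?thesis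
  proof eventually_elim
    case (elim h)
    then have "sym_diff2 F t h < (l + \<epsilon>) * h^2"
      by (simp add: divide_less_eq)
    also have "\<dots> \<le> (C + \<epsilon>) * h^2"
      using \<open>l \<le> C\<close> by (intro mult_right_mono) auto
    moreover have "0 \<le> \<epsilon> * sym_diff2 W t h"
      using W_convex[of h] elim \<epsilon> by simp
    ultimately show ?case
      by (simp add: algebra_simps)
  qed
qed

lemma eventually_sym_diff2_perturbed_neg_if_blowup:
  fixes F W :: "real \<Rightarrow> real"
  assumes lim: "((\<lambda>h. sym_diff2 F t h / h^2) \<longlongrightarrow> l) (at_right 0)"
    and blowup: "\<And>K. \<forall>\<^sub>F h in at_right 0. K * h^2 \<le> sym_diff2 W t h"
    and \<epsilon>: "0 < \<epsilon>"
  shows "\<forall>\<^sub>F h in at_right 0. sym_diff2 F t h - (C + \<epsilon>) * h^2 - \<epsilon> * sym_diff2 W t h < 0"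
proof -
  have "\<forall>\<^sub>F h in at_right 0. sym_diff2 F t h / h^2 < l + 1"
    using lim by (intro order_tendstoD(2)) auto
  moreover have "\<forall>\<^sub>F h in at_right (0::real). 0 < h"
    by (simp add: eventually_at_right_less)
  ultimately show ?thesis
    using blowup[of "(\<bar>l\<bar> + \<bar>C\<bar> + 1) / \<epsilon>"]
  proof eventually_elim
    case (elim h)
    then have "sym_diff2 F t h < (l + 1) * h^2"
      by (simp add: divide_less_eq)
    moreover have "\<epsilon> * (((\<bar>l\<bar> + \<bar>C\<bar> + 1) / \<epsilon>) * h^2) \<le> \<epsilon> * sym_diff2 W t h"
      using elim(3) \<epsilon> by (intro mult_left_mono) auto
    then have "(\<bar>l\<bar> + \<bar>C\<bar> + 1) * h^2 \<le> \<epsilon> * sym_diff2 W t h"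
      using \<epsilon> by simp
    moreover have "l + 1 \<le> (\<bar>l\<bar> + \<bar>C\<bar> + 1) + (C + \<epsilon>)"
      using \<epsilon> abs_ge_self[of l] abs_ge_minus_self[of C] by linarith
    then have "(l + 1) * h^2 \<le> (\<bar>l\<bar> + \<bar>C\<bar> + 1) * h^2 + (C + \<epsilon>) * h^2"
      unfolding distrib_right[symmetric] by (rule mult_right_mono) simp
    ultimately show ?case
      by linarith
  qed
qed

text \<open>Zygmund's function \<open>W\<close> absorbs the exceptional null set, and the maximum principle is
  applied to \<open>F - (C + \<epsilon>) t\<^sup>2/2 - \<epsilon> W\<close>.\<close>
theorem sym_diff2_le_if_ae_bounded:
  fixes F :: "real \<Rightarrow> real"
  assumes cont: "continuous_on {a..b} F"
    and lim: "\<And>t. t \<in> {a<..<b} \<Longrightarrow> ((\<lambda>h. sym_diff2 F t h / h^2) \<longlongrightarrow> L t) (at_right 0)"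
    and N: "N \<in> null_sets lborel"
    and bound: "\<And>t. t \<in> {a<..<b} \<Longrightarrow> t \<notin> N \<Longrightarrow> L t \<le> C"
    and x: "a \<le> x - h" "x + h \<le> b" "0 < h"
  shows "sym_diff2 F x h \<le> C * h^2"
proof -
  obtain W where W: "continuous_on UNIV W" "\<And>t h. 0 \<le> h \<Longrightarrow> 0 \<le> sym_diff2 W t h"
    "\<And>t K. t \<in> N \<Longrightarrow> \<forall>\<^sub>F h in at_right 0. K * h^2 \<le> sym_diff2 W t h"
    using exists_convex_sym_diff2_blowup[OF N] by blast
  have perturbed: "sym_diff2 F x h \<le> (C + \<epsilon>) * h^2 + \<epsilon> * sym_diff2 W x h" if "0 < \<epsilon>" for \<epsilon>
  proof -
    define g where "g t = F t - (C + \<epsilon>) * (t^2 / 2) - \<epsilon> * W t" for t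
    have sym_diff2_g: "sym_diff2 g t s = sym_diff2 F t s - (C + \<epsilon>) * s^2 - \<epsilon> * sym_diff2 W t s" for t s
      unfolding g_def sym_diff2_def power2_eq_square by (simp add: field_simps)
    have "sym_diff2 g x h \<le> 0"
    proof (rule sym_diff2_nonpos_if_frequently_neg[OF _ _ x])
      show "continuous_on {a..b} g"
        unfolding g_def by (intro continuous_intros cont continuous_on_subset[OF W(1)]) auto
      fix t
      assume t: "t \<in> {a<..<b}"
      have "\<forall>\<^sub>F s in at_right 0. sym_diff2 g t s < 0"
      proof (cases "t \<in> N")
        case True
        from eventually_sym_diff2_perturbed_neg_if_blowup[OF lim[OF t] W(3)[OF True] that]
        show ?thesis
          unfolding sym_diff2_g .
      next
        case False
        from eventually_sym_diff2_perturbed_neg_if_le[OF lim[OF t] W(2) bound[OF t False] that]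
        show ?thesis
          unfolding sym_diff2_g .
      qed
      then show "\<exists>\<^sub>F s in at_right 0. sym_diff2 g t s < 0"
        by (simp add: eventually_frequently)
    qed
    then show ?thesis
      unfolding sym_diff2_g by simp
  qed
  have "0 \<le> sym_diff2 W x h"
    using W(2) x by simp
  show ?thesis
  proof (rule field_le_epsilon)
    fix e :: real
    assume "0 < e"
    define D where "D = h^2 + sym_diff2 W x h"
    have "0 < D"
      using \<open>0 \<le> sym_diff2 W x h\<close> x by (simp add: D_def add_pos_nonneg)
    define \<epsilon> where "\<epsilon> = e / D"
    have "0 < \<epsilon>"
      using \<open>0 < e\<close> \<open>0 < D\<close> by (simp add: \<epsilon>_def)
    moreover have "\<epsilon> * h^2 + \<epsilon> * sym_diff2 W x h = \<epsilon> * D"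
      by (simp add: D_def distrib_left)
    moreover have "\<epsilon> * D = e"
      using \<open>0 < D\<close> by (simp add: \<epsilon>_def)
    ultimately show "sym_diff2 F x h \<le> C * h^2 + e"
      using perturbed[of \<epsilon>] by (simp add: algebra_simps)
  qed
qed

corollary abs_sym_diff2_le_if_ae_bounded:
  fixes F :: "real \<Rightarrow> real"
  assumes cont: "continuous_on {a..b} F"
    and lim: "\<And>t. t \<in> {a<..<b} \<Longrightarrow> ((\<lambda>h. sym_diff2 F t h / h^2) \<longlongrightarrow> L t) (at_right 0)"
    and N: "N \<in> null_sets lborel"
    and bound: "\<And>t. t \<in> {a<..<b} \<Longrightarrow> t \<notin> N \<Longrightarrow> \<bar>L t\<bar> \<le> C"
    and x: "a \<le> x - h" "x + h \<le> b" "0 < h"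
  shows "\<bar>sym_diff2 F x h\<bar> \<le> C * h^2"
proof -
  have "sym_diff2 F x h \<le> C * h^2"
  proof (rule sym_diff2_le_if_ae_bounded[OF cont lim N _ x])
    show "L t \<le> C" if "t \<in> {a<..<b}" "t \<notin> N" for t
      using bound[OF that] by (simp add: abs_le_iff)
  qed
  moreover have "sym_diff2 (\<lambda>x. - F x) x h \<le> C * h^2"
  proof (rule sym_diff2_le_if_ae_bounded[OF _ _ N _ x])
    show "continuous_on {a..b} (\<lambda>x. - F x)"
      using cont by (rule continuous_on_minus)
    have "sym_diff2 (\<lambda>x. - F x) t h = - sym_diff2 F t h" for t h
      by (simp add: sym_diff2_def)
    then show "((\<lambda>h. sym_diff2 (\<lambda>x. - F x) t h / h^2) \<longlongrightarrow> - L t) (at_right 0)" if "t \<in> {a<..<b}" for t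
      using tendsto_minus[OF lim[OF that]] by simp
    show "- L t \<le> C" if "t \<in> {a<..<b}" "t \<notin> N" for t
      using bound[OF that] by (simp add: abs_le_iff)
  qed
  moreover have "sym_diff2 (\<lambda>x. - F x) x h = - sym_diff2 F x h"
    by (simp add: sym_diff2_def)
  ultimately show ?thesis
    unfolding abs_le_iff by linarith
qed

section \<open>Sine series\<close>

definition sine_series :: "(nat \<Rightarrow> real) \<Rightarrow> real \<Rightarrow> real" where
  "sine_series b x = (\<Sum>m. b m * sin (real m * pi * x))"

lemma summable_sine_series:
  "summable (\<lambda>m. \<bar>b m\<bar>) \<Longrightarrow> summable (\<lambda>m. b m * sin (real m * pi * x))"
  by (rule summable_comparison_test[of _ "\<lambda>m. \<bar>b m\<bar>"]) (auto simp: abs_mult intro!: mult_left_le)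

lemma continuous_on_sine_series:
  assumes "summable (\<lambda>m. \<bar>b m\<bar>)"
  shows "continuous_on UNIV (sine_series b)"
proof -
  have "uniform_limit UNIV (\<lambda>n x. \<Sum>m<n. b m * sin (real m * pi * x)) (sine_series b) sequentially"
    unfolding sine_series_def[abs_def]
    by (rule Weierstrass_m_test[OF _ assms]) (auto simp: abs_mult intro!: mult_left_le)
  then show ?thesis
    by (rule uniform_limit_theorem[rotated]) (auto intro!: always_eventually continuous_intros)
qed

lemma sin_sym_diff2:
  fixes a h :: real
  shows "sin (a + h) + sin (a - h) - 2 * sin a = -4 * sin (h/2)^2 * sin a"
proof -
  have cos_h: "cos h = 1 - 2 * sin (h/2)^2"
    using cos_double_sin[of "h/2"] by simp
  show ?thesis
    by (simp add: sin_add sin_diff cos_h algebra_simps)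
qed

lemma sums_sym_diff2_sine_series:
  assumes b: "summable (\<lambda>m. \<bar>b m\<bar>)"
  shows "(\<lambda>m. b m * (-4 * sin (real m * pi * h / 2)^2) * sin (real m * pi * x))
           sums sym_diff2 (sine_series b) x h"
proof -
  have "b m * sin (real m * pi * (x + h)) + b m * sin (real m * pi * (x - h)) - 2 * (b m * sin (real m * pi * x))
      = b m * (-4 * sin (real m * pi * h / 2)^2) * sin (real m * pi * x)" for m
  proof -
    have args: "real m * pi * (x + h) = real m * pi * x + real m * pi * h"
      "real m * pi * (x - h) = real m * pi * x - real m * pi * h"
      by (simp_all add: algebra_simps)
    have "sin (real m * pi * (x + h)) + sin (real m * pi * (x - h)) - 2 * sin (real m * pi * x)
        = -4 * sin (real m * pi * h / 2)^2 * sin (real m * pi * x)"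
      unfolding args by (rule sin_sym_diff2)
    then have "b m * (sin (real m * pi * (x + h)) + sin (real m * pi * (x - h)) - 2 * sin (real m * pi * x))
        = b m * (-4 * sin (real m * pi * h / 2)^2 * sin (real m * pi * x))"
      by (rule arg_cong)
    then show ?thesis
      by (simp only: distrib_left right_diff_distrib mult.left_commute[of 2] mult.assoc)
  qed
  moreover have "(\<lambda>m. b m * sin (real m * pi * (x + h)) + b m * sin (real m * pi * (x - h))
      - 2 * (b m * sin (real m * pi * x))) sums sym_diff2 (sine_series b) x h"
    unfolding sym_diff2_def sine_series_def
    by (intro sums_diff sums_add sums_mult summable_sums summable_sine_series b)
  ultimately show ?thesis
    by simp
qed

lemma summable_abs_div_sq:
  fixes c :: "nat \<Rightarrow> real"
  assumes "\<And>m. \<bar>c m\<bar> \<le> B"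
  shows "summable (\<lambda>m. \<bar>c m / (real m * pi)^2\<bar>)"
proof (rule summable_comparison_test[OF _ summable_mult[OF inverse_power_summable[of 2], of B]], intro exI allI impI)
  fix m :: nat
  have "1 \<le> pi^2"
    using power_mono[of 1 pi 2] pi_gt3 by simp
  then have "\<bar>c m\<bar> / (real m ^ 2 * pi^2) \<le> B / (real m ^ 2 * 1)"
    using assms[of m] by (cases "m = 0") (auto intro!: frac_le mult_left_mono)
  moreover have "\<bar>c m / (real m * pi)^2\<bar> = \<bar>c m\<bar> / (real m ^ 2 * pi^2)"
    by (simp add: abs_divide power_mult_distrib)
  ultimately show "norm \<bar>c m / (real m * pi)^2\<bar> \<le> B * inverse (real m ^ 2)"
    by (simp add: divide_inverse)
qed auto

text \<open>Riemann's first lemma. The second difference quotients of the twice integrated series are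
  the means of the series under the summability kernel \<open>sinc_sq\<close>.\<close>
theorem tendsto_sym_diff2_sine_series:
  fixes c :: "nat \<Rightarrow> real"
  assumes bounded: "\<And>m. \<bar>c m\<bar> \<le> B"
    and conv: "summable (\<lambda>m. c m * sin (real m * pi * t))"
  shows "((\<lambda>h. sym_diff2 (sine_series (\<lambda>m. c m / (real m * pi)^2)) t h / h^2) \<longlongrightarrow> - sine_series c t)
           (at_right 0)"
proof -
  define \<beta> where "\<beta> m = c m / (real m * pi)^2" for m
  define a where "a m = c m * sin (real m * pi * t)" for m
  have quotient: "sym_diff2 (sine_series \<beta>) t h / h^2 = - (\<Sum>m. a m * sinc_sq (real m * (pi * h / 2)))"
    if h: "0 < h" for h
  proof -
    have terms: "(\<lambda>m. \<beta> m * (-4 * sin (real m * pi * h / 2)^2) * sin (real m * pi * t) / h^2)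
        = (\<lambda>m. - (a m * sinc_sq (real m * (pi * h / 2))))"
    proof
      fix m
      show "\<beta> m * (-4 * sin (real m * pi * h / 2)^2) * sin (real m * pi * t) / h^2
          = - (a m * sinc_sq (real m * (pi * h / 2)))"
        using h by (cases "m = 0") (simp_all add: \<beta>_def a_def sinc_sq_def field_simps power2_eq_square)
    qed
    have "summable (\<lambda>m. \<bar>\<beta> m\<bar>)"
      unfolding \<beta>_def by (rule summable_abs_div_sq[OF bounded])
    from sums_divide[OF sums_sym_diff2_sine_series[OF this, of h t], where c = "h^2"]
    have "(\<lambda>m. - (a m * sinc_sq (real m * (pi * h / 2)))) sums (sym_diff2 (sine_series \<beta>) t h / h^2)"
      unfolding terms .
    from sums_minus[OF this]
    have "(\<lambda>m. a m * sinc_sq (real m * (pi * h / 2))) sums - (sym_diff2 (sine_series \<beta>) t h / h^2)"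
      by simp
    then show ?thesis
      by (simp add: sums_iff)
  qed
  have "filterlim (\<lambda>h::real. pi * h / 2) (at_right 0) (at_right 0)"
  proof (rule tendsto_imp_filterlim_at_right)
    show "((\<lambda>h::real. pi * h / 2) \<longlongrightarrow> 0) (at_right 0)"
      by (intro tendsto_eq_intros) auto
    show "\<forall>\<^sub>F h in at_right 0. 0 < pi * h / 2"
      using eventually_at_right_less[of "0::real"] by eventually_elim simp
  qed
  from filterlim_compose[OF tendsto_suminf_sinc_sq[OF summable_sums[OF conv]] this]
  have "((\<lambda>h. - (\<Sum>m. a m * sinc_sq (real m * (pi * h / 2)))) \<longlongrightarrow> - sine_series c t) (at_right 0)"
    unfolding a_def sine_series_def by (intro tendsto_minus) simp
  moreover have "\<forall>\<^sub>F h in at_right 0. - (\<Sum>m. a m * sinc_sq (real m * (pi * h / 2)))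
      = sym_diff2 (sine_series \<beta>) t h / h^2"
    using eventually_at_right_less[of "0::real"] by eventually_elim (simp add: quotient)
  ultimately show ?thesis
    unfolding \<beta>_def by (rule Lim_transform_eventually)
qed

lemma has_integral_cos_int_mult_pi:
  fixes k :: real
  assumes "k \<in> \<int>"
  shows "((\<lambda>x. cos (k * pi * x)) has_integral (if k = 0 then 1 else 0)) {0..1}"
proof (cases "k = 0")
  case False
  have "((\<lambda>x. cos (k * pi * x)) has_integral (sin (k * pi * 1) / (k * pi) - sin (k * pi * 0) / (k * pi))) {0..1}"
    using False
    by (intro fundamental_theorem_of_calculus)
       (auto intro!: derivative_eq_intros simp: has_real_derivative_iff_has_vector_derivative[symmetric])
  moreover have "sin (k * pi) = 0"
    using assms by (simp add: sin_times_pi_eq_0)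
  ultimately show ?thesis
    using False by simp
qed (use has_integral_const_real[of 1 0 1] in simp)

lemma has_integral_sin_mult_sin:
  assumes "1 \<le> n"
  shows "((\<lambda>x. sin (real m * pi * x) * sin (real n * pi * x)) has_integral (if m = n then 1/2 else 0)) {0..1}"
proof -
  have product: "(\<lambda>x. sin (real m * pi * x) * sin (real n * pi * x))
      = (\<lambda>x. (cos ((real m - real n) * pi * x) - cos ((real m + real n) * pi * x)) / 2)"
    by (rule ext) (simp add: cos_diff cos_add algebra_simps)
  have "((\<lambda>x. (cos ((real m - real n) * pi * x) - cos ((real m + real n) * pi * x)) / 2)
      has_integral ((if real m - real n = 0 then 1 else 0) - (if real m + real n = 0 then 1 else 0)) / 2) {0..1}"
    by (intro has_integral_divide has_integral_diff has_integral_cos_int_mult_pi) auto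
  then show ?thesis
    unfolding product using assms by (cases "m = n") simp_all
qed

lemma has_integral_sine_series_mult_sin:
  assumes \<gamma>: "summable (\<lambda>m. \<bar>\<gamma> m\<bar>)" and n: "1 \<le> n"
  shows "((\<lambda>x. sine_series \<gamma> x * sin (real n * pi * x)) has_integral \<gamma> n / 2) {0..1}"
proof -
  define s where "s m x = sin (real m * pi * x)" for m x
  have "uniform_limit {0..1} (\<lambda>k x. \<Sum>m<k. \<gamma> m * (s m x * s n x))
      (\<lambda>x. \<Sum>m. \<gamma> m * (s m x * s n x)) sequentially"
  proof (rule Weierstrass_m_test[OF _ \<gamma>])
    fix m x
    have "\<bar>s m x * s n x\<bar> \<le> 1"
      by (simp add: s_def abs_mult mult_le_one)
    then show "norm (\<gamma> m * (s m x * s n x)) \<le> \<bar>\<gamma> m\<bar>"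
      by (simp add: abs_mult mult_left_le)
  qed
  then obtain I J where IJ: "\<And>k. ((\<lambda>x. \<Sum>m<k. \<gamma> m * (s m x * s n x)) has_integral I k) {0..1}"
      "((\<lambda>x. \<Sum>m. \<gamma> m * (s m x * s n x)) has_integral J) {0..1}" "I \<longlonglongrightarrow> J"
    by (rule uniform_limit_integral) (auto simp: s_def intro!: continuous_intros)
  have "((\<lambda>x. \<Sum>m<k. \<gamma> m * (s m x * s n x)) has_integral
      (\<Sum>m<k. \<gamma> m * (if m = n then 1/2 else 0))) {0..1}" for k
    unfolding s_def by (intro has_integral_sum has_integral_mult_right has_integral_sin_mult_sin[OF n]) auto
  then have "I k = (\<Sum>m<k. \<gamma> m * (if m = n then 1/2 else 0))" for k
    using IJ(1) has_integral_unique by blast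
  then have "\<forall>\<^sub>F k in sequentially. I k = \<gamma> n / 2"
    by (intro eventually_sequentiallyI[of "Suc n"])
      (simp add: if_distrib[of "\<lambda>t. _ * t"] sum.delta' cong: if_cong)
  then have J: "J = \<gamma> n / 2"
    using IJ(3) by (metis LIMSEQ_unique tendsto_eventually)
  have series: "(\<lambda>x. \<Sum>m. \<gamma> m * (s m x * s n x)) = (\<lambda>x. sine_series \<gamma> x * s n x)"
  proof
    fix x
    show "(\<Sum>m. \<gamma> m * (s m x * s n x)) = sine_series \<gamma> x * s n x"
      unfolding sine_series_def s_def
      using suminf_mult2[OF summable_sine_series[OF \<gamma>, of x], of "s n x"] by (simp add: s_def mult_ac)
  qed
  show ?thesis
    using IJ(2)[unfolded series J] by (simp only: s_def)
qed

lemma has_integral_mult_sine_sum: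
  assumes f: "\<And>n. n \<in> {1..M} \<Longrightarrow> ((\<lambda>x. f x * sin (real n * pi * x)) has_integral \<gamma> n / 2) {0..1}"
  shows "((\<lambda>x. f x * (\<Sum>m\<in>{1..M}. \<gamma> m * sin (real m * pi * x))) has_integral
           (\<Sum>m\<in>{1..M}. (\<gamma> m)^2) / 2) {0..1}"
proof -
  have eq: "(\<lambda>x. f x * (\<Sum>m\<in>{1..M}. \<gamma> m * sin (real m * pi * x)))
      = (\<lambda>x. \<Sum>m\<in>{1..M}. \<gamma> m * (f x * sin (real m * pi * x)))"
    by (rule ext) (simp add: sum_distrib_left mult_ac)
  have half: "(\<Sum>m\<in>{1..M}. \<gamma> m * (\<gamma> m / 2)) = (\<Sum>m\<in>{1..M}. (\<gamma> m)^2) / 2"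
    by (simp add: power2_eq_square sum_divide_distrib)
  have "((\<lambda>x. \<Sum>m\<in>{1..M}. \<gamma> m * (f x * sin (real m * pi * x))) has_integral
      (\<Sum>m\<in>{1..M}. \<gamma> m * (\<gamma> m / 2))) {0..1}"
    by (intro has_integral_sum has_integral_mult_right f) auto
  then show ?thesis
    unfolding eq half .
qed

lemma has_integral_sine_sum_mult_sin:
  assumes n: "n \<in> {1..M}"
  shows "((\<lambda>x. (\<Sum>m\<in>{1..M}. \<gamma> m * sin (real m * pi * x)) * sin (real n * pi * x)) has_integral \<gamma> n / 2)
           {0..1}"
proof -
  have eq: "(\<lambda>x. (\<Sum>m\<in>{1..M}. \<gamma> m * sin (real m * pi * x)) * sin (real n * pi * x))
      = (\<lambda>x. \<Sum>m\<in>{1..M}. \<gamma> m * (sin (real m * pi * x) * sin (real n * pi * x)))"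
    by (rule ext) (simp add: sum_distrib_right mult.assoc)
  have delta: "(\<Sum>m\<in>{1..M}. \<gamma> m * (if m = n then 1/2 else 0)) = \<gamma> n / 2"
    using n by (simp add: if_distrib[of "\<lambda>t. _ * t"] sum.delta' cong: if_cong)
  have "((\<lambda>x. \<Sum>m\<in>{1..M}. \<gamma> m * (sin (real m * pi * x) * sin (real n * pi * x))) has_integral
      (\<Sum>m\<in>{1..M}. \<gamma> m * (if m = n then 1/2 else 0))) {0..1}"
    using n by (intro has_integral_sum has_integral_mult_right has_integral_sin_mult_sin) auto
  then show ?thesis
    unfolding eq delta .
qed

text \<open>Bessel's inequality for the sine system \<open>sin (m\<pi>x)\<close>, \<open>m \<ge> 1\<close>, which is orthogonal on \<open>[0, 1]\<close>
  with \<open>\<integral>\<^sub>0\<^sup>1 sin\<^sup>2 (m\<pi>x) dx = 1/2\<close>.\<close>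
theorem sum_sq_le_if_abs_sine_series_le:
  assumes \<gamma>: "summable (\<lambda>m. \<bar>\<gamma> m\<bar>)"
    and bound: "\<And>x. x \<in> {0..1} \<Longrightarrow> \<bar>sine_series \<gamma> x\<bar> \<le> B"
  shows "(\<Sum>m\<in>{1..M}. (\<gamma> m)^2) \<le> 2 * B^2"
proof -
  define G where "G = sine_series \<gamma>"
  define P where "P x = (\<Sum>m\<in>{1..M}. \<gamma> m * sin (real m * pi * x))" for x
  define S where "S = (\<Sum>m\<in>{1..M}. (\<gamma> m)^2)"
  have GP: "((\<lambda>x. G x * P x) has_integral S / 2) {0..1}"
    unfolding G_def P_def S_def
    by (intro has_integral_mult_sine_sum has_integral_sine_series_mult_sin[OF \<gamma>]) simp
  have PP: "((\<lambda>x. P x * P x) has_integral S / 2) {0..1}"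
    unfolding P_def S_def by (intro has_integral_mult_sine_sum has_integral_sine_sum_mult_sin)
  have "continuous_on {0..1} G"
    unfolding G_def using continuous_on_sine_series[OF \<gamma>] by (rule continuous_on_subset) simp
  then have GG: "((\<lambda>x. G x * G x) has_integral integral {0..1} (\<lambda>x. G x * G x)) {0..1}"
    by (intro integrable_integral integrable_continuous_interval continuous_intros)
  have square: "(\<lambda>x. (G x - P x)^2) = (\<lambda>x. G x * G x - 2 * (G x * P x) + P x * P x)"
    by (rule ext) (simp add: power2_eq_square algebra_simps)
  have "((\<lambda>x. G x * G x - 2 * (G x * P x) + P x * P x) has_integral
      integral {0..1} (\<lambda>x. G x * G x) - 2 * (S / 2) + S / 2) {0..1}"
    by (intro has_integral_add has_integral_diff GG has_integral_mult_right GP PP)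
  from has_integral_nonneg[OF this[folded square]]
  have "S / 2 \<le> integral {0..1} (\<lambda>x. G x * G x)"
    by simp
  also have "\<dots> \<le> integral {0..1} (\<lambda>x::real. B^2)"
  proof (rule integral_le[OF has_integral_integrable[OF GG]])
    fix x :: real
    assume "x \<in> {0..1}"
    then have "\<bar>G x\<bar> \<le> B"
      using bound by (simp add: G_def)
    then have "\<bar>G x\<bar> * \<bar>G x\<bar> \<le> B * B"
      by (intro mult_mono) auto
    then show "G x * G x \<le> B^2"
      by (simp add: power2_eq_square abs_mult[symmetric])
  qed (rule integrable_const_ivl)
  also have "\<dots> = B^2"
    by simp
  finally show ?thesis
    by (simp add: S_def)
qed

lemma half_le_sin:
  fixes y :: real
  assumes y: "0 \<le> y" "y \<le> pi/3"
  shows "y / 2 \<le> sin y"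
proof (cases "y = 0")
  case False
  then have "0 < y"
    using y by simp
  obtain z where z: "0 < z" "z < y" "(sin y - y/2) - (sin 0 - 0/2) = (y - 0) * (cos z - 1/2)"
    using MVT2[OF \<open>0 < y\<close>, of "\<lambda>t. sin t - t/2" "\<lambda>t. cos t - 1/2"]
    by (force intro!: derivative_eq_intros)
  have "cos (pi/3) \<le> cos z"
    using z y by (subst cos_mono_le_eq) auto
  then have "0 \<le> y * (cos z - 1/2)"
    using \<open>0 < y\<close> by (simp add: cos_60)
  then show ?thesis
    using z(3) by simp
qed simp

lemma sq_coefficient_sym_diff2_ge:
  fixes b h :: real
  assumes m: "1 \<le> m" and h: "0 \<le> h" "real m * h \<le> 1/2"
  shows "b^2 * (h^4 / 16) \<le> (b / (real m * pi)^2 * (-4 * sin (real m * pi * h / 2)^2))^2"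
proof -
  define \<beta> where "\<beta> = b / (real m * pi)^2"
  define y where "y = real m * pi * h / 2"
  have "y \<le> pi / 4"
    using mult_right_mono[OF h(2), of "pi/2"] by (simp add: y_def)
  moreover have "0 \<le> y"
    using h by (simp add: y_def)
  ultimately have "(y / 2)^4 \<le> sin y ^ 4"
    by (intro power_mono half_le_sin) auto
  then have "\<beta>^2 * 16 * (y / 2)^4 \<le> \<beta>^2 * 16 * sin y ^ 4"
    by (intro mult_left_mono) auto
  moreover have "\<beta>^2 * 16 * (y / 2)^4 = b^2 * (h^4 / 16)"
    using m by (simp add: \<beta>_def y_def power_mult_distrib power_divide field_simps)
  moreover have "(\<beta> * (-4 * sin y ^ 2))^2 = \<beta>^2 * 16 * sin y ^ 4"
    by (simp add: power_mult_distrib flip: power_mult)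
  ultimately show ?thesis
    by (simp add: \<beta>_def y_def)
qed

lemma sum_sq_le_if_abs_sym_diff2_le:
  fixes c :: "nat \<Rightarrow> real"
  assumes bounded: "\<And>m. \<bar>c m\<bar> \<le> B"
    and sym_diff2_le: "\<And>x h. x \<in> {0..1} \<Longrightarrow> 0 < h \<Longrightarrow> h \<le> 1/2 \<Longrightarrow>
           \<bar>sym_diff2 (sine_series (\<lambda>m. c m / (real m * pi)^2)) x h\<bar> \<le> C * h^2"
  shows "(\<Sum>m\<in>{1..M}. (c m)^2) \<le> 32 * C^2"
proof (cases "M = 0")
  case False
  define h where "h = 1 / (2 * real M)"
  have h: "0 < h" "h \<le> 1/2"
    using False by (auto simp: h_def field_simps)
  define \<beta> where "\<beta> m = c m / (real m * pi)^2" for m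
  define \<gamma> where "\<gamma> m = \<beta> m * (-4 * sin (real m * pi * h / 2)^2)" for m
  have \<beta>: "summable (\<lambda>m. \<bar>\<beta> m\<bar>)"
    unfolding \<beta>_def by (rule summable_abs_div_sq[OF bounded])
  have \<gamma>: "summable (\<lambda>m. \<bar>\<gamma> m\<bar>)"
  proof (rule summable_comparison_test[OF _ summable_mult[OF \<beta>, of 4]], intro exI allI impI)
    fix m :: nat
    have "\<bar>\<beta> m\<bar> * (4 * sin (real m * pi * h / 2)^2) \<le> \<bar>\<beta> m\<bar> * 4"
      by (intro mult_left_mono) (auto simp: abs_square_le_1)
    then show "norm \<bar>\<gamma> m\<bar> \<le> 4 * \<bar>\<beta> m\<bar>"
      by (simp add: \<gamma>_def abs_mult mult_ac)
  qed
  have "sine_series \<gamma> x = sym_diff2 (sine_series \<beta>) x h" for x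
    using sums_unique[OF sums_sym_diff2_sine_series[OF \<beta>, of h x]] by (simp add: sine_series_def \<gamma>_def)
  then have "(\<Sum>m\<in>{1..M}. (\<gamma> m)^2) \<le> 2 * (C * h^2)^2"
    using sym_diff2_le h unfolding \<beta>_def by (intro sum_sq_le_if_abs_sine_series_le[OF \<gamma>]) auto
  moreover have "(c m)^2 * (h^4 / 16) \<le> (\<gamma> m)^2" if m: "m \<in> {1..M}" for m
  proof -
    have "real m * h \<le> 1/2"
      using m False by (simp add: h_def field_simps)
    then show ?thesis
      unfolding \<gamma>_def \<beta>_def using m h by (intro sq_coefficient_sym_diff2_ge) auto
  qed
  then have "(\<Sum>m\<in>{1..M}. (c m)^2) * (h^4 / 16) \<le> (\<Sum>m\<in>{1..M}. (\<gamma> m)^2)"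
    unfolding sum_distrib_right by (rule sum_mono)
  ultimately have "(\<Sum>m\<in>{1..M}. (c m)^2) * (h^4 / 16) \<le> (32 * C^2) * (h^4 / 16)"
    by (simp add: power_mult_distrib flip: power_mult)
  then show ?thesis
    using h by (simp add: mult_le_cancel_right)
qed simp

lemma sin_reflect_into_01:
  fixes x :: real
  assumes x: "x \<in> {-1<..<2}"
  obtains y \<sigma> where "y \<in> {0..1}" "\<sigma> = 1 \<or> \<sigma> = -1" "x = y \<or> x = -y \<or> x = 2 - y"
    "\<And>m::nat. sin (real m * pi * x) = \<sigma> * sin (real m * pi * y)"
proof -
  consider "x \<in> {0..1}" | "x < 0" | "x > 1"
    by fastforce
  then show thesis
  proof cases
    case 1
    then show thesis
      by (intro that[of x 1]) auto
  next
    case 2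
    then show thesis
      using x by (intro that[of "-x" "-1"]) auto
  next
    case 3
    have "sin (real m * pi * x) = - sin (real m * pi * (2 - x))" for m :: nat
    proof -
      have "real m * pi * (2 - x) = real (2 * m) * pi - real m * pi * x"
        by (simp add: algebra_simps)
      then show ?thesis
        by (simp add: sin_diff)
    qed
    then show thesis
      using x 3 by (intro that[of "2 - x" "-1"]) auto
  qed
qed

lemma null_sets_reflection:
  fixes c :: real
  assumes N: "N \<in> null_sets lborel"
  shows "{x. c - x \<in> N} \<in> null_sets lborel"
proof -
  have N_borel: "N \<in> sets borel"
    using N by (simp add: null_sets_def)
  have "emeasure lborel (uminus -` N) = emeasure (distr lborel borel (uminus :: real \<Rightarrow> real)) N"
    using N_borel by (subst emeasure_distr) auto
  also have "\<dots> = 0"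
    using null_setsD1[OF N] by (simp add: lborel_distr_uminus)
  finally have "uminus -` N \<in> null_sets lborel"
    using measurable_sets[OF borel_measurable_uminus[OF measurable_ident_sets[OF refl]] N_borel]
    by (intro null_setsI) auto
  from null_sets_translation[OF this, of c]
  show ?thesis
    by simp
qed

lemma sine_series_reflect_into_01:
  fixes c :: "nat \<Rightarrow> real"
  assumes conv: "\<And>x. x \<in> {0..1} \<Longrightarrow> summable (\<lambda>m. c m * sin (real m * pi * x))"
    and t: "t \<in> {-1<..<2}"
  obtains y where "y \<in> {0..1}" "t = y \<or> t = -y \<or> t = 2 - y"
    "summable (\<lambda>m. c m * sin (real m * pi * t))" "\<bar>sine_series c t\<bar> = \<bar>sine_series c y\<bar>"
proof -
  obtain y \<sigma> where y: "y \<in> {0..1}" "\<sigma> = 1 \<or> \<sigma> = -1" "t = y \<or> t = -y \<or> t = 2 - y"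
    and sin_t: "\<And>m::nat. sin (real m * pi * t) = \<sigma> * sin (real m * pi * y)"
    using sin_reflect_into_01[OF t] by blast
  have "(\<lambda>m. c m * sin (real m * pi * t)) = (\<lambda>m. \<sigma> * (c m * sin (real m * pi * y)))"
    by (simp add: sin_t mult.left_commute)
  then have "summable (\<lambda>m. c m * sin (real m * pi * t))" "sine_series c t = \<sigma> * sine_series c y"
    using summable_mult[OF conv[OF y(1)], of \<sigma>] suminf_mult[OF conv[OF y(1)], of \<sigma>]
    by (simp_all add: sine_series_def)
  with y show thesis
    by (intro that[of y]) (auto simp: abs_mult)
qed

text \<open>The sum extends to \<open>(-1, 2)\<close> by odd reflection in \<open>0\<close> and \<open>1\<close>, Riemann's first lemma
  and the a.e. bound give \<open>\<bar>sym_diff2 F x h\<bar> \<le> C h\<^sup>2\<close> for the twice integrated series \<open>F\<close>, and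
  Bessel's inequality applied to these second differences bounds the coefficients.\<close>
theorem summable_sq_if_sine_series_ae_bounded:
  fixes c :: "nat \<Rightarrow> real"
  assumes conv: "\<And>x. x \<in> {0..1} \<Longrightarrow> summable (\<lambda>m. c m * sin (real m * pi * x))"
    and bounded: "AE x in lborel. x \<in> {0..1} \<longrightarrow> \<bar>sine_series c x\<bar> \<le> C"
  shows "summable (\<lambda>m. (c m)^2)"
proof -
  have "c \<longlonglongrightarrow> 0"
    by (rule Cantor_Lebesgue) (rule summable_LIMSEQ_zero[OF conv])
  obtain B where B: "\<And>m. \<bar>c m\<bar> \<le> B"
    using convergent_imp_Bseq[OF convergentI[OF \<open>c \<longlonglongrightarrow> 0\<close>]] unfolding Bseq_def real_norm_def by blast
  define F where "F = sine_series (\<lambda>m. c m / (real m * pi)^2)"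
  have lim: "((\<lambda>h. sym_diff2 F t h / h^2) \<longlongrightarrow> - sine_series c t) (at_right 0)"
    if "t \<in> {-1<..<2}" for t
  proof -
    have "summable (\<lambda>m. c m * sin (real m * pi * t))"
      using sine_series_reflect_into_01[OF conv that] by blast
    then show ?thesis
      unfolding F_def by (rule tendsto_sym_diff2_sine_series[OF B])
  qed
  obtain N where N: "\<And>x. x \<in> space lborel - N \<Longrightarrow> x \<in> {0..1} \<longrightarrow> \<bar>sine_series c x\<bar> \<le> C"
    "N \<in> null_sets lborel"
    using AE_E3[OF bounded] by blast
  define N' where "N' = N \<union> {x. - x \<in> N} \<union> {x. 2 - x \<in> N}"
  have "N' \<in> null_sets lborel"
    unfolding N'_def using null_sets_reflection[OF N(2), of 0] null_sets_reflection[OF N(2), of 2]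
    by (intro null_sets.Un N(2)) simp_all
  moreover have "\<bar>- sine_series c t\<bar> \<le> C" if t: "t \<in> {-1<..<2}" "t \<notin> N'" for t
  proof -
    obtain y where y: "y \<in> {0..1}" "t = y \<or> t = -y \<or> t = 2 - y"
      "\<bar>sine_series c t\<bar> = \<bar>sine_series c y\<bar>"
      using sine_series_reflect_into_01[OF conv t(1)] by blast
    have "y \<notin> N"
      using y(2) t(2) unfolding N'_def by auto
    then show ?thesis
      using N(1)[of y] y(1,3) by simp
  qed
  moreover have "continuous_on {-1..2} F"
    unfolding F_def using continuous_on_sine_series[OF summable_abs_div_sq[OF B]]
    by (rule continuous_on_subset) simp
  ultimately have "\<bar>sym_diff2 F x h\<bar> \<le> C * h^2" if "x \<in> {0..1}" "0 < h" "h \<le> 1/2" for x h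
    using that by (intro abs_sym_diff2_le_if_ae_bounded[OF _ lim]) auto
  then have partial: "(\<Sum>m\<in>{1..M}. (c m)^2) \<le> 32 * C^2" for M
    unfolding F_def by (intro sum_sq_le_if_abs_sym_diff2_le[OF B])
  have "summable (\<lambda>n. (c (Suc n))^2)"
  proof (rule bounded_imp_summable[of _ "32 * C^2"])
    show "(\<Sum>k\<le>n. (c (Suc k))^2) \<le> 32 * C^2" for n
      using partial[of "Suc n"] by (simp only: One_nat_def sum.atLeast1_atMost_eq lessThan_Suc_atMost)
  qed simp
  then show ?thesis
    by (rule summable_Suc_iff[THEN iffD1])
qed

section \<open>The function \<open>k\<^sub>\<tau>\<close>\<close>

lemma pointwise_wd_powr:
  fixes a :: real
  assumes a: "a < 1"
  shows "pointwise_wd (\<lambda>m. real m powr a)"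
  unfolding pointwise_wd_def
proof
  fix x :: real
  assume x: "x \<in> {0..1}"
  define v where "v m = sqrt 2 / pi * real m powr (a - 1)" for m :: nat
  have kterm_eq: "kterm (\<lambda>m. real m powr a) x = (\<lambda>m. sin (real m * (pi * x)) * v m)"
    by (auto simp: kterm_def v_def powr_diff mult_ac)
  have v0: "v \<longlonglongrightarrow> 0"
    unfolding v_def using a
    by (intro tendsto_mult_right_zero tendsto_neg_powr filterlim_real_sequentially) simp
  have "summable (\<lambda>m. \<bar>v (Suc m) - v (Suc (Suc m))\<bar>)"
  proof -
    have "v (Suc (Suc m)) \<le> v (Suc m)" for m
      unfolding v_def using a by (intro mult_left_mono powr_mono2') auto
    moreover have "summable (\<lambda>m. v (Suc m) - v (Suc (Suc m)))"
      by (rule telescope_summable'[OF LIMSEQ_Suc[OF v0]])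
    ultimately show ?thesis
      by (simp add: abs_of_nonneg)
  qed
  then have variation: "summable (\<lambda>m. \<bar>v m - v (Suc m)\<bar>)"
    by (subst (asm) summable_Suc_iff)
  have "summable (\<lambda>m. sin (real m * (pi * x)) * v m)"
  proof (cases "x = 0 \<or> x = 1")
    case True
    then have "sin (real m * (pi * x)) = 0" for m
      by (auto simp: mult_ac)
    then show ?thesis
      by simp
  next
    case False
    with x have "sin (pi * x / 2) > 0"
      by (intro sin_gt_zero) auto
    then show ?thesis
      using sums_by_parts[OF abs_sum_sin_le v0 variation] by (auto simp: sums_iff)
  qed
  then show "summable (\<lambda>n. kterm (\<lambda>m. real m powr a) x (Suc n))"
    by (subst summable_Suc_iff) (simp only: kterm_eq)
qed

lemma inv_in_lp_powr:
  fixes p q :: real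
  assumes "0 < q" "q < p"
  shows "inv_in_lp (\<lambda>m. real m powr (1 / q)) p"
proof -
  have "\<bar>1 / real (Suc n) powr (1 / q)\<bar> powr p = real (Suc n) powr (- (p / q))" for n
    by (simp add: powr_minus_divide[symmetric] powr_powr)
  moreover have "summable (\<lambda>n. real n powr (- (p / q)))"
    using assms by (simp add: summable_real_powr_iff field_simps)
  then have "summable (\<lambda>n. real (Suc n) powr (- (p / q)))"
    by (rule summable_ignore_initial_segment[where k = 1, simplified])
  ultimately show ?thesis
    unfolding inv_in_lp_def by simp
qed

lemma summable_abs_powr_mono:
  fixes x :: "nat \<Rightarrow> real"
  assumes summable: "summable (\<lambda>n. \<bar>x n\<bar> powr p)" and p: "0 < p" "p \<le> q"
  shows "summable (\<lambda>n. \<bar>x n\<bar> powr q)"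
proof (rule summable_comparison_test[OF _ summable])
  have "\<forall>\<^sub>F n in sequentially. \<bar>x n\<bar> powr p < 1"
    using summable_LIMSEQ_zero[OF summable] by (intro order_tendstoD(2)) auto
  then show "\<exists>N. \<forall>n\<ge>N. norm (\<bar>x n\<bar> powr q) \<le> \<bar>x n\<bar> powr p"
    unfolding eventually_sequentially
  proof (elim exE, intro exI allI impI)
    fix N n
    assume "\<forall>n\<ge>N. \<bar>x n\<bar> powr p < 1" "N \<le> n"
    then have "\<bar>x n\<bar> powr p < 1"
      by blast
    then have "\<bar>x n\<bar> \<le> 1"
      using gr_one_powr[of "\<bar>x n\<bar>" p] p(1) by (meson less_asym not_le)
    then show "norm (\<bar>x n\<bar> powr q) \<le> \<bar>x n\<bar> powr p"
      using p by (simp add: powr_mono')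
  qed
qed

lemma k_tau_eq_sine_series:
  assumes wd: "pointwise_wd \<tau>" and x: "x \<in> {0..1}"
  shows "summable (\<lambda>m. \<tau> m * (sqrt 2 / (pi * real m)) * sin (real m * pi * x))"
    and "k_tau \<tau> x = sine_series (\<lambda>m. \<tau> m * (sqrt 2 / (pi * real m))) x"
proof -
  have kterm: "kterm \<tau> x = (\<lambda>m. \<tau> m * (sqrt 2 / (pi * real m)) * sin (real m * pi * x))"
    by (simp add: kterm_def fun_eq_iff)
  have "summable (\<lambda>n. kterm \<tau> x (Suc n))"
    using wd x unfolding pointwise_wd_def by blast
  then show summable: "summable (\<lambda>m. \<tau> m * (sqrt 2 / (pi * real m)) * sin (real m * pi * x))"
    by (subst (asm) summable_Suc_iff) (simp only: kterm)
  show "k_tau \<tau> x = sine_series (\<lambda>m. \<tau> m * (sqrt 2 / (pi * real m))) x"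
    unfolding k_tau_def sine_series_def kterm using suminf_split_head[OF summable] by simp
qed

lemma not_summable_ratio_sq_if_summable_inverse_sq:
  fixes \<tau> :: "nat \<Rightarrow> real"
  assumes nonzero: "\<And>n. \<tau> (Suc n) \<noteq> 0"
    and inverse: "summable (\<lambda>n. (1 / \<tau> (Suc n))^2)"
  shows "\<not> summable (\<lambda>n. (\<tau> (Suc n) / real (Suc n))^2)"
proof
  assume ratio: "summable (\<lambda>n. (\<tau> (Suc n) / real (Suc n))^2)"
  have am_gm: "inverse (real (Suc n)) \<le> ((1 / \<tau> (Suc n))^2 + (\<tau> (Suc n) / real (Suc n))^2) / 2" for n
  proof -
    have "inverse (real (Suc n)) = (1 / \<tau> (Suc n)) * (\<tau> (Suc n) / real (Suc n))"
      using nonzero[of n] by (simp add: field_simps)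
    also have "\<dots> \<le> ((1 / \<tau> (Suc n))^2 + (\<tau> (Suc n) / real (Suc n))^2) / 2"
      using sum_squares_ge_zero[of "1 / \<tau> (Suc n) - \<tau> (Suc n) / real (Suc n)" 0]
      by (simp add: power2_eq_square algebra_simps)
    finally show ?thesis .
  qed
  have "summable (\<lambda>n. inverse (real (Suc n)))"
    by (rule summable_comparison_test[OF _ summable_divide[OF summable_add[OF inverse ratio], where c = 2]])
      (use am_gm in auto)
  then show False
    using not_summable_harmonic summable_Suc_iff by blast
qed

lemma not_in_Linf_D_k_tau:
  fixes \<tau> :: "nat \<Rightarrow> real" and p :: real
  assumes \<tau>: "\<forall>m\<ge>1. \<tau> m > 0" and p: "0 < p" "p \<le> 2"
    and lp: "inv_in_lp \<tau> p" and wd: "pointwise_wd \<tau>"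
  shows "\<not> in_Linf_D (k_tau \<tau>)"
proof
  assume "in_Linf_D (k_tau \<tau>)"
  then obtain C where C: "AE x in lborel. x \<in> {0..1} \<longrightarrow> \<bar>k_tau \<tau> x\<bar> \<le> C"
    unfolding in_Linf_D_def by blast
  have \<tau>_pos: "0 < \<tau> (Suc n)" for n
    using \<tau> by simp
  define c where "c m = \<tau> m * (sqrt 2 / (pi * real m))" for m
  have "AE x in lborel. x \<in> {0..1} \<longrightarrow> \<bar>sine_series c x\<bar> \<le> C"
    using C unfolding c_def by (auto elim!: AE_mp intro!: AE_I2 simp: k_tau_eq_sine_series(2)[OF wd])
  from summable_sq_if_sine_series_ae_bounded[OF k_tau_eq_sine_series(1)[OF wd, folded c_def] this]
  have "summable (\<lambda>n. (c (Suc n))^2)"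
    by (rule summable_Suc_iff[THEN iffD2])
  moreover have "pi^2 / 2 * (c (Suc n))^2 = (\<tau> (Suc n) / real (Suc n))^2" for n
  proof -
    define m where "m = real (Suc n)"
    have "m \<noteq> 0"
      by (simp add: m_def)
    then have "pi^2 / 2 * (\<tau> (Suc n) * (sqrt 2 / (pi * m)))^2 = (\<tau> (Suc n) / m)^2"
      by (simp add: power_mult_distrib power_divide field_simps)
    then show ?thesis
      by (simp add: c_def m_def)
  qed
  ultimately have ratio: "summable (\<lambda>n. (\<tau> (Suc n) / real (Suc n))^2)"
    using summable_mult[of "\<lambda>n. (c (Suc n))^2" "pi^2 / 2"] by (simp only:)
  have "summable (\<lambda>n. \<bar>1 / \<tau> (Suc n)\<bar> powr 2)"
    using summable_abs_powr_mono[OF lp[unfolded inv_in_lp_def] p] .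
  moreover have "\<bar>1 / \<tau> (Suc n)\<bar> powr 2 = (1 / \<tau> (Suc n))^2" for n
    using \<tau>_pos[of n] by (subst powr_numeral) auto
  ultimately have "summable (\<lambda>n. (1 / \<tau> (Suc n))^2)"
    by simp
  moreover have "\<tau> (Suc n) \<noteq> 0" for n
    using \<tau>_pos[of n] by simp
  ultimately show False
    using not_summable_ratio_sq_if_summable_inverse_sq ratio by blast
qed

theorem proposition4:
  shows "(\<forall>q::real. q > 1 \<longrightarrow>
            pointwise_wd (\<lambda>m. real m powr (1 / q)) \<and>
            (\<forall>p::real. p > q \<longrightarrow> inv_in_lp (\<lambda>m. real m powr (1 / q)) p))
       \<and> (\<forall>(\<tau>::nat \<Rightarrow> real) (p::real).
            (\<forall>m\<ge>1. \<tau> m > 0) \<longrightarrow> 0 < p \<longrightarrow> p \<le> 2 \<longrightarrow> inv_in_lp \<tau> p \<longrightarrow>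
            pointwise_wd \<tau> \<longrightarrow> \<not> in_Linf_D (k_tau \<tau>))"
proof (intro conjI allI impI)
  fix q p :: real
  assume "q > 1"
  then show "pointwise_wd (\<lambda>m. real m powr (1 / q))"
    by (intro pointwise_wd_powr) simp
  assume "p > q"
  with \<open>q > 1\<close> show "inv_in_lp (\<lambda>m. real m powr (1 / q)) p"
    by (intro inv_in_lp_powr) auto
next
  fix \<tau> :: "nat \<Rightarrow> real" and p :: real
  assume "\<forall>m\<ge>1. \<tau> m > 0" "0 < p" "p \<le> 2" "inv_in_lp \<tau> p" "pointwise_wd \<tau>"
  then show "\<not> in_Linf_D (k_tau \<tau>)"
    by (rule not_in_Linf_D_k_tau)
qed

end
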